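(* Let $c\ge 0$ be a constant. For all sufficiently large $n$, for every $c\log n$-random labeled graph $G$ on $n$ nodes, in model II $\wedge$ $\gamma$ (nodes know their neighbours; arbitrary relabeling allowed) with node labels of $(1+(c+3)\log n)\log n$ bits, there is a shortest path routing scheme whose local routing functions are stored in $O(1)$ bits per node; hence the complete routing scheme (including labels) uses $(c+3)n\log^2 n+n\log n+O(n)$ bits.
   Context: $C(x\mid y)$ is Kolmogorov complexity w.r.t. a fixed universal Turing machine; $\log$ is base 2. A labeled graph $G$ on $V=\{1,\dots,n\}$ is encoded by $E(G)\in\{0,1\}^{n(n-1)/2}$ (bit $i$ indicates the $i$-th possible edge in lexicographic order); with $\mathcal G$ the set of all labeled graphs on $V$, $G$ is $\delta(n)$-random if $C(E(G)\mid n,\delta,\mathcal G)\ge n(n-1)/2-\delta(n)$. Routing: edges at a node $v$ are attached to ports $1,\dots,\deg(v)$. A routing scheme consists of a local routing function at every node $u$ returning, for each destination label $v\ne u$, an edge at $u$; a shortest path routing scheme always yields shortest paths. Space = total bits of all local routing functions plus, in model $\gamma$, bits of labels. Model II: each node knows for free the labels of its neighbours and which edge leads to each. Model $\gamma$: nodes may be given arbitrary new labels before the scheme is computed; destinations are given by the new labels; label bits are charged. *)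

theory Defs
  imports Complex_Main "HOL-Library.Nat_Bijection"
begin

datatype recf = Z | S | Id nat | Cn recf "recf list" | Pr recf recf | Mn recf

inductive eval :: "recf \<Rightarrow> nat list \<Rightarrow> nat \<Rightarrow> bool" where
  eval_Z: "eval Z xs 0"
| eval_S: "eval S (x # xs) (Suc x)"
| eval_Id: "i < length xs \<Longrightarrow> eval (Id i) xs (xs ! i)"
| eval_Cn: "list_all2 (\<lambda>g y. eval g xs y) gs ys \<Longrightarrow> eval f ys z \<Longrightarrow> eval (Cn f gs) xs z"
| eval_Pr0: "eval f xs z \<Longrightarrow> eval (Pr f g) (0 # xs) z"
| eval_PrS: "eval (Pr f g) (x # xs) y \<Longrightarrow> eval g (x # y # xs) z \<Longrightarrow> eval (Pr f g) (Suc x # xs) z"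
| eval_Mn: "eval f (x # xs) 0 \<Longrightarrow> (\<forall>y<x. \<exists>z. eval f (y # xs) z \<and> z \<noteq> 0) \<Longrightarrow> eval (Mn f) xs x"

text \<open>Bijective coding of bit strings as natural numbers.\<close>
fun bl2n :: "bool list \<Rightarrow> nat" where
  "bl2n [] = 0"
| "bl2n (False # xs) = 2 * bl2n xs + 1"
| "bl2n (True # xs) = 2 * bl2n xs + 2"

definition computable_descr :: "(bool list \<Rightarrow> nat \<Rightarrow> bool list option) \<Rightarrow> bool" where
  "computable_descr \<phi> \<longleftrightarrow>
     (\<exists>f. \<forall>p y x. \<phi> p y = Some x \<longleftrightarrow> eval f [bl2n p, y] (bl2n x))"

definition KC :: "(bool list \<Rightarrow> nat \<Rightarrow> bool list option) \<Rightarrow> bool list \<Rightarrow> nat \<Rightarrow> nat" where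
  "KC U x y = (LEAST l. \<exists>p. length p = l \<and> U p y = Some x)"

definition universal :: "(bool list \<Rightarrow> nat \<Rightarrow> bool list option) \<Rightarrow> bool" where
  "universal U \<longleftrightarrow> computable_descr U \<and>
     (\<forall>\<phi>. computable_descr \<phi> \<longrightarrow>
        (\<exists>k. \<forall>p y x. \<phi> p y = Some x \<longrightarrow> (\<exists>q. U q y = Some x \<and> length q \<le> length p + k)))"

definition is_graph :: "nat \<Rightarrow> (nat \<Rightarrow> nat \<Rightarrow> bool) \<Rightarrow> bool" where
  "is_graph n adj \<longleftrightarrow> (\<forall>i j. adj i j \<longrightarrow> i \<in> {1..n} \<and> j \<in> {1..n} \<and> i \<noteq> j \<and> adj j i)"

definition edge_slots :: "nat \<Rightarrow> (nat \<times> nat) list" where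
  "edge_slots n = concat (map (\<lambda>i. map (\<lambda>j. (i, j)) [Suc i..<Suc n]) [1..<Suc n])"

definition graph_code :: "nat \<Rightarrow> (nat \<Rightarrow> nat \<Rightarrow> bool) \<Rightarrow> bool list" where
  "graph_code n adj = map (\<lambda>(i, j). adj i j) (edge_slots n)"

text \<open>delta-randomness, with the condition encoded by n (which determines the class of graphs).\<close>
definition random_graph :: "(bool list \<Rightarrow> nat \<Rightarrow> bool list option) \<Rightarrow> real \<Rightarrow> nat \<Rightarrow> (nat \<Rightarrow> nat \<Rightarrow> bool) \<Rightarrow> bool" where
  "random_graph U \<delta> n adj \<longleftrightarrow>
     real (KC U (graph_code n adj) n) \<ge> real (n * (n - 1) div 2) - \<delta>"

inductive walk :: "(nat \<Rightarrow> nat \<Rightarrow> bool) \<Rightarrow> nat \<Rightarrow> nat \<Rightarrow> nat \<Rightarrow> bool" for adj where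
  walk0: "walk adj 0 u u"
| walkS: "adj u w \<Longrightarrow> walk adj k w v \<Longrightarrow> walk adj (Suc k) u v"

definition is_dist :: "(nat \<Rightarrow> nat \<Rightarrow> bool) \<Rightarrow> nat \<Rightarrow> nat \<Rightarrow> nat \<Rightarrow> bool" where
  "is_dist adj u v d \<longleftrightarrow> walk adj d u v \<and> (\<forall>k<d. \<not> walk adj k u v)"

text \<open>Port assignment: for each node u a list of its neighbours, port i (1-based) being
  entry i-1.\<close>
definition valid_ports :: "nat \<Rightarrow> (nat \<Rightarrow> nat \<Rightarrow> bool) \<Rightarrow> (nat \<Rightarrow> nat list) \<Rightarrow> bool" where
  "valid_ports n adj ports \<longleftrightarrow>
     (\<forall>u\<in>{1..n}. distinct (ports u) \<and> set (ports u) = {w. adj u w})"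

text \<open>nh v x = next node chosen at x for destination v. The scheme yields shortest paths.\<close>
definition shortest_path_routing :: "nat \<Rightarrow> (nat \<Rightarrow> nat \<Rightarrow> bool) \<Rightarrow> (nat \<Rightarrow> nat \<Rightarrow> nat) \<Rightarrow> bool" where
  "shortest_path_routing n adj nh \<longleftrightarrow>
     (\<forall>u\<in>{1..n}. \<forall>v\<in>{1..n}. u \<noteq> v \<longrightarrow>
        (\<exists>d. is_dist adj u v d \<and>
             (\<forall>i<d. adj ((nh v ^^ i) u) ((nh v ^^ Suc i) u)) \<and>
             (nh v ^^ d) u = v))"

text \<open>The interpreter D receives the bits stored at node u, u's label, the labels of u's
  neighbours in port order (model II knowledge), and the destination label; it returns
  a port number.\<close>
definition computable_router :: "(bool list \<Rightarrow> bool list \<Rightarrow> bool list list \<Rightarrow> bool list \<Rightarrow> nat) \<Rightarrow> bool" where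
  "computable_router D \<longleftrightarrow>
     (\<exists>f. \<forall>a b cs d r. D a b cs d = r \<longleftrightarrow>
        eval f [bl2n a, bl2n b, list_encode (map bl2n cs), bl2n d] r)"

definition next_hop ::
  "(bool list \<Rightarrow> bool list \<Rightarrow> bool list list \<Rightarrow> bool list \<Rightarrow> nat) \<Rightarrow> (nat \<Rightarrow> nat list) \<Rightarrow>
   (nat \<Rightarrow> bool list) \<Rightarrow> (nat \<Rightarrow> bool list) \<Rightarrow> nat \<Rightarrow> nat \<Rightarrow> nat" where
  "next_hop D ports lab bits v u =
     ports u ! (D (bits u) (lab u) (map lab (ports u)) (lab v) - 1)"

definition routes_by_ports ::
  "nat \<Rightarrow> (bool list \<Rightarrow> bool list \<Rightarrow> bool list list \<Rightarrow> bool list \<Rightarrow> nat) \<Rightarrow> (nat \<Rightarrow> nat list) \<Rightarrow>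
   (nat \<Rightarrow> bool list) \<Rightarrow> (nat \<Rightarrow> bool list) \<Rightarrow> bool" where
  "routes_by_ports n D ports lab bits \<longleftrightarrow>
     (\<forall>u\<in>{1..n}. \<forall>v\<in>{1..n}. u \<noteq> v \<longrightarrow>
        D (bits u) (lab u) (map lab (ports u)) (lab v) \<in> {1..length (ports u)})"

end

theory Submission
  imports Defs
begin

text \<open>In a \<open>c log n\<close>-random graph on \<open>n\<close> nodes, for large \<open>n\<close>, any two nodes have a common
  neighbour among the first \<open>M \<approx> (5/8) log\<^sup>2 n\<close> nodes (the hubs). Otherwise the \<open>2(M - 2)\<close> bits
  of the graph code joining the two nodes to the hubs take only \<open>3^(M-2)\<close> values, and a
  computable decompressor rebuilds the code from a description about \<open>(log\<^sup>2 n)/4\<close> bits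
  shorter, which the randomness deficiency \<open>c log n\<close> does not allow. So the graph has diameter
  two, and if every label consists of the node number and the bit mask of the node's
  neighbours among the hubs, every node can route along shortest paths by reading the labels
  alone: it forwards to the destination if that is a neighbour, and otherwise to a neighbouring
  hub adjacent to the destination. Labels take \<open>2M + 4\<close> bits and the local routing functions
  none.\<close>

section \<open>Total \<mu>-recursive functions\<close>

definition total_recursive :: "nat \<Rightarrow> (nat list \<Rightarrow> nat) \<Rightarrow> bool" where
  "total_recursive k F \<longleftrightarrow> (\<exists>t. \<forall>xs. length xs = k \<longrightarrow> (\<forall>r. eval t xs r \<longleftrightarrow> r = F xs))"

definition decidable :: "nat \<Rightarrow> (nat list \<Rightarrow> bool) \<Rightarrow> bool" where
  "decidable k P \<longleftrightarrow> total_recursive k (\<lambda>xs. of_bool (P xs))"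

named_theorems recursive_intros

lemma total_recursiveI: "(\<And>xs r. length xs = k \<Longrightarrow> eval t xs r \<longleftrightarrow> r = F xs) \<Longrightarrow> total_recursive k F"
  unfolding total_recursive_def by blast

lemma total_recursiveE:
  assumes "total_recursive k F"
  obtains t where "\<And>xs r. length xs = k \<Longrightarrow> eval t xs r \<longleftrightarrow> r = F xs"
  using assms unfolding total_recursive_def by blast

lemma total_recursive_cong:
  "total_recursive k F \<Longrightarrow> (\<And>xs. length xs = k \<Longrightarrow> F xs = G xs) \<Longrightarrow> total_recursive k G"
  unfolding total_recursive_def by metis

lemma eval_iff:
  "eval Z xs r \<longleftrightarrow> r = 0"
  "eval S (x # xs) r \<longleftrightarrow> r = Suc x"
  "i < length xs \<Longrightarrow> eval (Id i) xs r \<longleftrightarrow> r = xs ! i"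
  "eval (Cn f gs) xs r \<longleftrightarrow> (\<exists>ys. list_all2 (\<lambda>g y. eval g xs y) gs ys \<and> eval f ys r)"
  "eval (Pr f g) (0 # xs) r \<longleftrightarrow> eval f xs r"
  "eval (Pr f g) (Suc x # xs) r \<longleftrightarrow> (\<exists>y. eval (Pr f g) (x # xs) y \<and> eval g (x # y # xs) r)"
  "eval (Mn f) xs r \<longleftrightarrow> eval f (r # xs) 0 \<and> (\<forall>y<r. \<exists>z. eval f (y # xs) z \<and> z \<noteq> 0)"
  by (auto intro: eval.intros elim: eval.cases)

lemma eval_projections:
  "length xs = k \<Longrightarrow> list_all2 (\<lambda>t y. eval t xs y) (map Id [0..<k]) ys \<longleftrightarrow> ys = xs"
  by (auto simp: list_all2_conv_all_nth eval_iff intro: nth_equalityI)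

lemma total_recursive_comp:
  assumes f: "total_recursive (length gs) f" and gs: "\<forall>g\<in>set gs. total_recursive k g"
  shows "total_recursive k (\<lambda>xs. f (map (\<lambda>g. g xs) gs))"
proof -
  from gs obtain T where T: "\<And>g xs r. g \<in> set gs \<Longrightarrow> length xs = k \<Longrightarrow> eval (T g) xs r \<longleftrightarrow> r = g xs"
    unfolding total_recursive_def by metis
  obtain tf where tf: "\<And>ys r. length ys = length gs \<Longrightarrow> eval tf ys r \<longleftrightarrow> r = f ys"
    using f by (rule total_recursiveE) blast
  have args: "list_all2 (\<lambda>t y. eval t xs y) (map T hs) ys \<longleftrightarrow> ys = map (\<lambda>g. g xs) hs"
    if "set hs \<subseteq> set gs" "length xs = k" for hs ys xs
    using that by (induction hs arbitrary: ys) (auto simp: list_all2_Cons1 T)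
  show ?thesis
    by (rule total_recursiveI[where t = "Cn tf (map T gs)"]) (simp add: eval_iff args tf)
qed

lemma total_recursive_prim_rec:
  assumes "total_recursive k b" "total_recursive (Suc (Suc k)) s" "total_recursive k g"
  shows "total_recursive k (\<lambda>xs. rec_nat (b xs) (\<lambda>i acc. s (i # acc # xs)) (g xs))"
proof -
  obtain tb where tb: "\<And>ys r. length ys = k \<Longrightarrow> eval tb ys r \<longleftrightarrow> r = b ys"
    using assms(1) by (rule total_recursiveE) blast
  obtain ts where ts: "\<And>ys r. length ys = Suc (Suc k) \<Longrightarrow> eval ts ys r \<longleftrightarrow> r = s ys"
    using assms(2) by (rule total_recursiveE) blast
  obtain tg where tg: "\<And>ys r. length ys = k \<Longrightarrow> eval tg ys r \<longleftrightarrow> r = g ys"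
    using assms(3) by (rule total_recursiveE) blast
  have rec: "eval (Pr tb ts) (x # xs) r \<longleftrightarrow> r = rec_nat (b xs) (\<lambda>i acc. s (i # acc # xs)) x"
    if "length xs = k" for x xs r
    using that by (induction x arbitrary: r) (auto simp: eval_iff tb ts)
  show ?thesis
    by (rule total_recursiveI[where t = "Cn (Pr tb ts) (tg # map Id [0..<k])"])
      (simp add: eval_iff list_all2_Cons1 eval_projections tg rec)
qed

lemma total_recursive_proj [recursive_intros]: "i < k \<Longrightarrow> total_recursive k (\<lambda>xs. xs ! i)"
  by (rule total_recursiveI[where t = "Id i"]) (simp add: eval_iff)

lemma total_recursive_comp1:
  "total_recursive 1 (\<lambda>ys. f (ys ! 0)) \<Longrightarrow> total_recursive k a \<Longrightarrow> total_recursive k (\<lambda>xs. f (a xs))"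
  using total_recursive_comp[of "[a]" "\<lambda>ys. f (ys ! 0)" k] by simp

lemma total_recursive_comp2:
  "total_recursive 2 (\<lambda>ys. f (ys ! 0) (ys ! 1)) \<Longrightarrow> total_recursive k a \<Longrightarrow> total_recursive k b \<Longrightarrow>
   total_recursive k (\<lambda>xs. f (a xs) (b xs))"
  using total_recursive_comp[of "[a, b]" "\<lambda>ys. f (ys ! 0) (ys ! 1)" k] by (simp add: numeral_2_eq_2)

lemma total_recursive_comp4:
  "total_recursive 4 (\<lambda>ys. f (ys ! 0) (ys ! 1) (ys ! 2) (ys ! 3)) \<Longrightarrow>
   total_recursive k a \<Longrightarrow> total_recursive k b \<Longrightarrow> total_recursive k c \<Longrightarrow> total_recursive k d \<Longrightarrow>
   total_recursive k (\<lambda>xs. f (a xs) (b xs) (c xs) (d xs))"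
  using total_recursive_comp[of "[a, b, c, d]" "\<lambda>ys. f (ys ! 0) (ys ! 1) (ys ! 2) (ys ! 3)" k]
  by (simp add: numeral_eq_Suc)

lemma total_recursive_Suc [recursive_intros]:
  "total_recursive k a \<Longrightarrow> total_recursive k (\<lambda>xs. Suc (a xs))"
proof -
  have "total_recursive 1 (\<lambda>xs. Suc (xs ! 0))"
    by (rule total_recursiveI[where t = S]) (auto simp: eval_iff length_Suc_conv)
  then show "total_recursive k a \<Longrightarrow> total_recursive k (\<lambda>xs. Suc (a xs))"
    by (rule total_recursive_comp1)
qed

lemma total_recursive_const [recursive_intros]: "total_recursive k (\<lambda>xs. c)"
proof (induction c)
  case 0
  show ?case by (rule total_recursiveI[where t = Z]) (simp add: eval_iff)
qed (rule total_recursive_Suc)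

lemma total_recursive_add [recursive_intros]:
  "total_recursive k a \<Longrightarrow> total_recursive k b \<Longrightarrow> total_recursive k (\<lambda>xs. a xs + b xs)"
proof -
  have "total_recursive 2 (\<lambda>xs. rec_nat (xs ! 1) (\<lambda>i acc. Suc ((i # acc # xs) ! 1)) (xs ! 0))"
    by (rule total_recursive_prim_rec) (rule recursive_intros | (simp; fail))+
  moreover have "rec_nat y (\<lambda>i acc. Suc acc) x = x + y" for x y :: nat
    by (induction x) auto
  ultimately have "total_recursive 2 (\<lambda>ys. ys ! 0 + ys ! 1)"
    by (auto elim: total_recursive_cong)
  then show "total_recursive k a \<Longrightarrow> total_recursive k b \<Longrightarrow> total_recursive k (\<lambda>xs. a xs + b xs)"
    by (rule total_recursive_comp2)
qed

lemma total_recursive_diff [recursive_intros]: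
  "total_recursive k a \<Longrightarrow> total_recursive k b \<Longrightarrow> total_recursive k (\<lambda>xs. a xs - b xs)"
proof -
  have "total_recursive 1 (\<lambda>xs. rec_nat 0 (\<lambda>i acc. (i # acc # xs) ! 0) (xs ! 0))"
    by (rule total_recursive_prim_rec) (rule recursive_intros | (simp; fail))+
  moreover have "rec_nat 0 (\<lambda>i acc. i) x = x - 1" for x :: nat
    by (induction x) auto
  ultimately have "total_recursive 1 (\<lambda>ys. ys ! 0 - 1)"
    by (auto elim: total_recursive_cong)
  then have pred: "total_recursive k (\<lambda>xs. c xs - 1)" if "total_recursive k c" for k c
    using that by (rule total_recursive_comp1)
  have "total_recursive 2 (\<lambda>xs. rec_nat (xs ! 0) (\<lambda>i acc. (i # acc # xs) ! 1 - 1) (xs ! 1))"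
    by (rule total_recursive_prim_rec) (rule recursive_intros pred | (simp; fail))+
  moreover have "rec_nat x (\<lambda>i acc. acc - 1) y = x - y" for x y :: nat
    by (induction y) auto
  ultimately have "total_recursive 2 (\<lambda>ys. ys ! 0 - ys ! 1)"
    by (auto elim: total_recursive_cong)
  then show "total_recursive k a \<Longrightarrow> total_recursive k b \<Longrightarrow> total_recursive k (\<lambda>xs. a xs - b xs)"
    by (rule total_recursive_comp2)
qed

lemma total_recursive_mult [recursive_intros]:
  "total_recursive k a \<Longrightarrow> total_recursive k b \<Longrightarrow> total_recursive k (\<lambda>xs. a xs * b xs)"
proof -
  have "total_recursive 2 (\<lambda>xs. rec_nat 0 (\<lambda>i acc. (i # acc # xs) ! 1 + (i # acc # xs) ! 3) (xs ! 0))"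
    by (rule total_recursive_prim_rec) (rule recursive_intros | (simp; fail))+
  moreover have "rec_nat 0 (\<lambda>i acc. acc + y) x = x * y" for x y :: nat
    by (induction x) auto
  ultimately have "total_recursive 2 (\<lambda>ys. ys ! 0 * ys ! 1)"
    by (auto elim: total_recursive_cong)
  then show "total_recursive k a \<Longrightarrow> total_recursive k b \<Longrightarrow> total_recursive k (\<lambda>xs. a xs * b xs)"
    by (rule total_recursive_comp2)
qed

lemma total_recursive_power [recursive_intros]:
  "total_recursive k a \<Longrightarrow> total_recursive k b \<Longrightarrow> total_recursive k (\<lambda>xs. a xs ^ b xs)"
proof -
  have "total_recursive 2 (\<lambda>xs. rec_nat 1 (\<lambda>i acc. (i # acc # xs) ! 1 * (i # acc # xs) ! 2) (xs ! 1))"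
    by (rule total_recursive_prim_rec) (rule recursive_intros | (simp; fail))+
  moreover have "rec_nat 1 (\<lambda>i acc. acc * x) y = x ^ y" for x y :: nat
    by (induction y) auto
  ultimately have "total_recursive 2 (\<lambda>ys. ys ! 0 ^ ys ! 1)"
    by (auto elim: total_recursive_cong)
  then show "total_recursive k a \<Longrightarrow> total_recursive k b \<Longrightarrow> total_recursive k (\<lambda>xs. a xs ^ b xs)"
    by (rule total_recursive_comp2)
qed

text \<open>Predicates are decided by arithmetic on their 0/1 indicators, with truncated subtraction
  serving as the test for positivity.\<close>

lemma decidable_eq [recursive_intros]:
  "total_recursive k a \<Longrightarrow> total_recursive k b \<Longrightarrow> decidable k (\<lambda>xs. a xs = b xs)"
  unfolding decidable_def
  by (rule total_recursive_cong[where F = "\<lambda>xs. 1 - ((a xs - b xs) + (b xs - a xs))"])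
    (rule recursive_intros | (simp; fail))+

lemma decidable_less [recursive_intros]:
  "total_recursive k a \<Longrightarrow> total_recursive k b \<Longrightarrow> decidable k (\<lambda>xs. a xs < b xs)"
  unfolding decidable_def
  by (rule total_recursive_cong[where F = "\<lambda>xs. 1 - (1 - (b xs - a xs))"])
    (rule recursive_intros | (simp; fail))+

lemma decidable_le [recursive_intros]:
  "total_recursive k a \<Longrightarrow> total_recursive k b \<Longrightarrow> decidable k (\<lambda>xs. a xs \<le> b xs)"
  unfolding decidable_def
  by (rule total_recursive_cong[where F = "\<lambda>xs. 1 - (a xs - b xs)"])
    (rule recursive_intros | (simp; fail))+

lemma decidable_not [recursive_intros]: "decidable k P \<Longrightarrow> decidable k (\<lambda>xs. \<not> P xs)"
  unfolding decidable_def
  by (rule total_recursive_cong[where F = "\<lambda>xs. 1 - of_bool (P xs)"])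
    (rule recursive_intros | (simp; fail))+

lemma decidable_conj [recursive_intros]:
  "decidable k P \<Longrightarrow> decidable k Q \<Longrightarrow> decidable k (\<lambda>xs. P xs \<and> Q xs)"
  unfolding decidable_def
  by (rule total_recursive_cong[where F = "\<lambda>xs. of_bool (P xs) * of_bool (Q xs)"])
    (rule recursive_intros | (simp; fail))+

lemma decidable_disj [recursive_intros]:
  "decidable k P \<Longrightarrow> decidable k Q \<Longrightarrow> decidable k (\<lambda>xs. P xs \<or> Q xs)"
  unfolding decidable_def
  by (rule total_recursive_cong[where F = "\<lambda>xs. 1 - (1 - of_bool (P xs)) * (1 - of_bool (Q xs))"])
    (rule recursive_intros | (simp; fail))+

lemma total_recursive_if [recursive_intros]:
  "decidable k P \<Longrightarrow> total_recursive k a \<Longrightarrow> total_recursive k b \<Longrightarrow>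
   total_recursive k (\<lambda>xs. if P xs then a xs else b xs)"
  unfolding decidable_def
  by (rule total_recursive_cong[where F = "\<lambda>xs. of_bool (P xs) * a xs + (1 - of_bool (P xs)) * b xs"])
    (rule recursive_intros | (simp; fail))+

lemma decidable_if [recursive_intros]:
  "decidable k P \<Longrightarrow> decidable k Q \<Longrightarrow> decidable k R \<Longrightarrow>
   decidable k (\<lambda>xs. if P xs then Q xs else R xs)"
  unfolding decidable_def if_distrib[of of_bool]
  by (intro total_recursive_if) (simp_all add: decidable_def)

lemma total_recursive_least:
  assumes P: "decidable (Suc k) P" and ex: "\<And>xs. length xs = k \<Longrightarrow> \<exists>x. P (x # xs)"
  shows "total_recursive k (\<lambda>xs. LEAST x. P (x # xs))"
proof -
  have "total_recursive (Suc k) (\<lambda>ys. 1 - of_bool (P ys))"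
    by (rule recursive_intros P[unfolded decidable_def])+
  then obtain t where t: "\<And>ys r. length ys = Suc k \<Longrightarrow> eval t ys r \<longleftrightarrow> r = 1 - of_bool (P ys)"
    by (rule total_recursiveE) blast
  show ?thesis
  proof (rule total_recursiveI[where t = "Mn t"])
    fix xs :: "nat list" and r :: nat assume xs: "length xs = k"
    then obtain x :: nat where "P (x # xs)" using ex by blast
    have "eval (Mn t) xs r \<longleftrightarrow> P (r # xs) \<and> (\<forall>y<r. \<not> P (y # xs))"
      using xs by (simp add: eval_iff t)
    also have "\<dots> \<longleftrightarrow> r = (LEAST x. P (x # xs))"
      using \<open>P (x # xs)\<close> by (metis (mono_tags) LeastI Least_equality not_less not_less_Least)
    finally show "eval (Mn t) xs r \<longleftrightarrow> r = (LEAST x. P (x # xs))" .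
  qed
qed

lemma total_recursive_div [recursive_intros]:
  "total_recursive k a \<Longrightarrow> total_recursive k b \<Longrightarrow> total_recursive k (\<lambda>xs. a xs div b xs)"
proof -
  have "total_recursive 2 (\<lambda>xs. LEAST q. (q # xs) ! 2 = 0 \<or> (q # xs) ! 1 < Suc ((q # xs) ! 0) * (q # xs) ! 2)"
  proof (rule total_recursive_least)
    show "decidable (Suc 2) (\<lambda>zs. zs ! 2 = 0 \<or> zs ! 1 < Suc (zs ! 0) * zs ! 2)"
      by (rule recursive_intros | (simp; fail))+
    fix xs :: "nat list"
    show "\<exists>q. (q # xs) ! 2 = 0 \<or> (q # xs) ! 1 < Suc ((q # xs) ! 0) * (q # xs) ! 2"
      by (rule exI[of _ "xs ! 0"]) (cases "xs ! 1"; simp)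
  qed
  moreover have "(LEAST q. b = 0 \<or> a < Suc q * b) = a div b" for a b :: nat
  proof (cases "b = 0")
    case False
    show ?thesis
    proof (rule Least_equality)
      have "a mod b < b" using False by simp
      then have "a < b + a div b * b" using div_mult_mod_eq[of a b] by linarith
      then show "b = 0 \<or> a < Suc (a div b) * b" by simp
      show "b = 0 \<or> a < Suc y * b \<Longrightarrow> a div b \<le> y" for y
        using False less_mult_imp_div_less[of a "Suc y" b] by simp
    qed
  qed simp
  ultimately have "total_recursive 2 (\<lambda>ys. ys ! 0 div ys ! 1)"
    by (auto elim: total_recursive_cong)
  then show "total_recursive k a \<Longrightarrow> total_recursive k b \<Longrightarrow> total_recursive k (\<lambda>xs. a xs div b xs)"
    by (rule total_recursive_comp2)
qed

lemma total_recursive_mod [recursive_intros]: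
  "total_recursive k a \<Longrightarrow> total_recursive k b \<Longrightarrow> total_recursive k (\<lambda>xs. a xs mod b xs)"
  by (rule total_recursive_cong[where F = "\<lambda>xs. a xs - b xs * (a xs div b xs)"])
    (rule recursive_intros | simp add: minus_mult_div_eq_mod)+

lemma decidable_bit [recursive_intros]:
  "total_recursive k a \<Longrightarrow> total_recursive k b \<Longrightarrow> decidable k (\<lambda>xs. bit (a xs) (b xs))"
  unfolding bit_iff_odd even_iff_mod_2_eq_zero by (rule recursive_intros | (simp; fail))+

lemma total_recursive_reindex:
  assumes "total_recursive k h" "\<forall>i<k. idx i < m"
  shows "total_recursive m (\<lambda>zs. h (map (\<lambda>i. zs ! idx i) [0..<k]))"
proof -
  have "total_recursive m (\<lambda>zs. h (map (\<lambda>g. g zs) (map (\<lambda>i zs. zs ! idx i) [0..<k])))"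
    by (rule total_recursive_comp) (use assms total_recursive_proj in auto)
  then show ?thesis by (simp add: comp_def)
qed

lemma total_recursive_sum:
  assumes h: "total_recursive (Suc k) h" and g: "total_recursive k g"
  shows "total_recursive k (\<lambda>xs. \<Sum>j<g xs. h (j # xs))"
proof -
  let ?idx = "\<lambda>i::nat. if i = 0 then 0 else Suc i"
  have "total_recursive (Suc (Suc k)) (\<lambda>zs. h (zs ! 0 # drop 2 zs))"
  proof (rule total_recursive_cong)
    show "total_recursive (Suc (Suc k)) (\<lambda>zs. h (map (\<lambda>i. zs ! ?idx i) [0..<Suc k]))"
      by (rule total_recursive_reindex[OF h]) auto
    show "h (map (\<lambda>i. zs ! ?idx i) [0..<Suc k]) = h (zs ! 0 # drop 2 zs)"
      if "length zs = Suc (Suc k)" for zs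
      using that by (intro arg_cong[where f = h] nth_equalityI)
        (auto simp: nth_Cons' simp del: upt_Suc)
  qed
  then have "total_recursive k (\<lambda>xs. rec_nat 0 (\<lambda>i acc. (i # acc # xs) ! 1 + h ((i # acc # xs) ! 0 # drop 2 (i # acc # xs))) (g xs))"
    by (intro total_recursive_prim_rec recursive_intros g) simp_all
  moreover have "rec_nat 0 (\<lambda>i acc. acc + h (i # xs)) n = (\<Sum>j<n. h (j # xs))" for n xs
    by (induction n) auto
  ultimately show ?thesis by (auto elim: total_recursive_cong)
qed

lemma total_recursive_funpow:
  assumes "total_recursive 1 (\<lambda>ys. f (ys ! 0))"
  shows "total_recursive 2 (\<lambda>xs. (f ^^ (xs ! 0)) (xs ! 1))"
proof -
  have "total_recursive 2 (\<lambda>xs. rec_nat (xs ! 1) (\<lambda>i acc. f ((i # acc # xs) ! 1)) (xs ! 0))"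
    by (intro total_recursive_prim_rec total_recursive_comp1[OF assms] recursive_intros) simp_all
  moreover have "rec_nat y (\<lambda>i acc. f acc) n = (f ^^ n) y" for n y
    by (induction n) auto
  ultimately show ?thesis by (auto elim: total_recursive_cong)
qed


section \<open>Binary codes\<close>

lemma bl2n_append: "bl2n (xs @ ys) = bl2n xs + 2 ^ length xs * bl2n ys"
  by (induction xs rule: bl2n.induct) auto

lemma bl2n_eq_sum: "bl2n xs = (\<Sum>i<length xs. (if xs ! i then 2 else 1) * 2 ^ i)"
proof (induction xs)
  case (Cons x xs)
  then show ?case
    by (cases x) (simp_all add: sum.lessThan_Suc_shift sum_distrib_left ac_simps del: sum.lessThan_Suc)
qed simp

lemma bit_Suc_bl2n: "i < length xs \<Longrightarrow> bit (Suc (bl2n xs)) i \<longleftrightarrow> xs ! i"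
proof (induction xs arbitrary: i)
  case (Cons x xs)
  have split: "Suc (bl2n (x # xs)) = of_bool x + 2 * Suc (bl2n xs)"
    by (cases x) simp_all
  show ?case
    unfolding split using Cons by (cases i) (simp_all add: bit_Suc bit_0)
qed simp

lemma bij_bl2n: "bij bl2n"
proof (rule bijI)
  show "inj bl2n"
  proof (rule injI)
    show "bl2n xs = bl2n ys \<Longrightarrow> xs = ys" for xs ys
    proof (induction xs arbitrary: ys)
      case Nil then show ?case by (cases ys rule: bl2n.cases) auto
    next
      case (Cons x xs)
      obtain y ys' where ys: "ys = y # ys'"
        using Cons.prems by (cases ys) (cases x; simp)+
      have "x = y"
        using arg_cong[OF Cons.prems, of even] ys by (cases x; cases y) simp_all
      then show ?case
        using Cons ys by (cases x) simp_all
    qed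
  qed
  show "surj bl2n"
  proof -
    have "\<exists>xs. bl2n xs = m" for m
    proof (induction m rule: less_induct)
      case (less m)
      show ?case
      proof (cases m)
        case (Suc m')
        obtain xs where xs: "bl2n xs = m' div 2"
          using less Suc by force
        show ?thesis
        proof (cases "even m'")
          case True
          then have "bl2n (False # xs) = m" using xs Suc by simp
          then show ?thesis ..
        next
          case False
          then have "bl2n (True # xs) = m" using xs Suc by simp
          then show ?thesis ..
        qed
      qed (use bl2n.simps(1) in blast)
    qed
    then show ?thesis by (metis surjI)
  qed
qed

lemma bl2n_inv [simp]: "bl2n (inv bl2n m) = m"
  using bij_bl2n by (simp add: bij_def surj_f_inv_f)

lemma inv_bl2n [simp]: "inv bl2n (bl2n xs) = xs"
  using bij_bl2n by (simp add: bij_def inv_f_f)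

lemma two_power_length_le_bl2n: "2 ^ length xs \<le> Suc (bl2n xs)"
  by (induction xs rule: bl2n.induct) auto

definition binary :: "nat \<Rightarrow> nat \<Rightarrow> bool list" where
  "binary L x = map (bit x) [0..<L]"

lemma length_binary [simp]: "length (binary L x) = L"
  by (simp add: binary_def)

lemma Suc_bl2n_binary: "x < 2 ^ L \<Longrightarrow> Suc (bl2n (binary L x)) = 2 ^ L + x"
proof (induction L arbitrary: x)
  case (Suc L)
  have "binary (Suc L) x = odd x # binary L (x div 2)"
    by (simp add: binary_def map_upt_Suc bit_Suc bit_0 del: upt_Suc)
  moreover have "x div 2 < 2 ^ L" using Suc.prems by simp
  ultimately show ?case
    using Suc.IH[of "x div 2"] by (cases "even x") (auto elim: evenE oddE)
qed (simp add: binary_def)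

lemma Suc_bl2n_binary_append:
  assumes "x < 2 ^ L"
  shows "Suc (bl2n (binary L x @ ys)) mod 2 ^ L = x"
    and "Suc (bl2n (binary L x @ ys)) div 2 ^ L = Suc (bl2n ys)"
proof -
  have split: "Suc (bl2n (binary L x @ ys)) = x + 2 ^ L * Suc (bl2n ys)"
    using Suc_bl2n_binary[OF assms] by (simp add: bl2n_append)
  have "(x + 2 ^ L * s) mod 2 ^ L = x" "(x + 2 ^ L * s) div 2 ^ L = s" for s :: nat
    using assms by simp_all
  then show "Suc (bl2n (binary L x @ ys)) mod 2 ^ L = x"
    and "Suc (bl2n (binary L x @ ys)) div 2 ^ L = Suc (bl2n ys)"
    by (simp_all only: split)
qed

lemma digit_sum:
  assumes "\<And>w. d w < B" "1 < (B::nat)"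
  shows "(\<Sum>w<K. d w * B ^ w) div B ^ j mod B = (if j < K then d j else 0)"
  using assms(1)
proof (induction K arbitrary: d j)
  case (Suc K)
  have split: "(\<Sum>w<Suc K. d w * B ^ w) = d 0 + B * (\<Sum>w<K. d (Suc w) * B ^ w)"
    by (subst sum.lessThan_Suc_shift) (simp add: sum_distrib_left ac_simps)
  show ?case
  proof (cases j)
    case 0
    then show ?thesis using split Suc.prems[of 0] by simp
  next
    case (Suc j')
    have "(d 0 + B * (\<Sum>w<K. d (Suc w) * B ^ w)) div B = (\<Sum>w<K. d (Suc w) * B ^ w)"
      using Suc.prems[of 0] assms(2) by simp
    then have "(\<Sum>w<Suc K. d w * B ^ w) div B ^ j = (\<Sum>w<K. d (Suc w) * B ^ w) div B ^ j'"
      using split Suc by (simp add: div_mult2_eq)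
    then show ?thesis using Suc.IH[of "\<lambda>w. d (Suc w)" j'] Suc.prems Suc by simp
  qed
qed simp

lemma digit_sum_less:
  assumes "\<And>w. d w < B"
  shows "(\<Sum>w<K. d w * B ^ w) < (B::nat) ^ K"
proof (induction K)
  case (Suc K)
  have "Suc (d K) * B ^ K \<le> B * B ^ K" using assms[of K] by (intro mult_le_mono1) simp
  with Suc show ?case by simp
qed simp


section \<open>Positions in the graph code\<close>

text \<open>Row \<open>a\<close> of \<^const>\<open>edge_slots\<close> holds the \<open>n - a\<close> slots \<open>(a, b)\<close> with \<open>a < b \<le> n\<close> and
  starts at position \<open>row_start n a\<close>.\<close>

definition slot_row :: "nat \<Rightarrow> nat \<Rightarrow> (nat \<times> nat) list" where
  "slot_row n a = map (Pair a) [Suc a..<Suc n]"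

definition row_start :: "nat \<Rightarrow> nat \<Rightarrow> nat" where
  "row_start n a = (\<Sum>j<a. if j = 0 then 0 else n - j)"

definition slot_fst :: "nat \<Rightarrow> nat \<Rightarrow> nat" where
  "slot_fst n i = (LEAST a. n \<le> a \<or> i < row_start n (Suc a))"

definition slot_snd :: "nat \<Rightarrow> nat \<Rightarrow> nat" where
  "slot_snd n i = i - row_start n (slot_fst n i) + slot_fst n i + 1"

lemma edge_slots_eq_concat_rows: "edge_slots n = concat (map (slot_row n) [1..<Suc n])"
  unfolding edge_slots_def slot_row_def by simp

lemma length_slot_row [simp]: "length (slot_row n a) = n - a"
  by (simp add: slot_row_def del: upt_Suc)

lemma row_start_Suc: "row_start n (Suc a) = row_start n a + (if a = 0 then 0 else n - a)"
  by (simp add: row_start_def)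

lemma length_rows_before: "length (concat (map (slot_row n) [1..<a])) = row_start n a"
proof (induction a)
  case (Suc a)
  show ?case
  proof (cases "a = 0")
    case False
    then have "[1..<Suc a] = [1..<a] @ [a]" by simp
    then show ?thesis using Suc False by (simp add: row_start_Suc)
  qed (simp add: row_start_def)
qed (simp add: row_start_def)

lemma sum_lessThan_diff: "(\<Sum>j<n. n - j) = n * Suc n div (2::nat)"
proof (induction n)
  case (Suc n)
  have "(\<Sum>j<Suc n. Suc n - j) = Suc n + (\<Sum>j<n. n - j)"
    by (simp add: sum.lessThan_Suc_shift del: sum.lessThan_Suc)
  with Suc show ?case by simp
qed simp

lemma row_start_last: "row_start n n = n * (n - 1) div 2"
proof (cases n)
  case (Suc m)
  have "row_start n n = (\<Sum>j<m. m - j)"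
    by (simp add: row_start_def Suc sum.lessThan_Suc_shift del: sum.lessThan_Suc)
  then show ?thesis by (simp add: sum_lessThan_diff Suc mult.commute)
qed (simp add: row_start_def)

lemma length_edge_slots: "length (edge_slots n) = n * (n - 1) div 2"
proof -
  have "length (edge_slots n) = row_start n (Suc n)"
    unfolding edge_slots_eq_concat_rows by (simp add: length_rows_before[symmetric] length_concat)
  then show ?thesis by (simp add: row_start_Suc row_start_last)
qed

lemma slot_fst_bounds:
  assumes "i < length (edge_slots n)"
  shows "1 \<le> slot_fst n i" "slot_fst n i < n"
    and "row_start n (slot_fst n i) \<le> i" "i < row_start n (Suc (slot_fst n i))"
proof -
  let ?P = "\<lambda>a. n \<le> a \<or> i < row_start n (Suc a)"
  have n: "n \<ge> 1" using assms by (cases n) (auto simp: length_edge_slots)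
  have "?P (n - 1)" using assms n by (simp add: row_start_last length_edge_slots)
  then have "slot_fst n i \<le> n - 1" and P: "?P (slot_fst n i)"
    unfolding slot_fst_def by (rule Least_le, rule LeastI)
  then show less: "slot_fst n i < n" and i: "i < row_start n (Suc (slot_fst n i))"
    using n by auto
  show nonzero: "1 \<le> slot_fst n i"
    using i by (cases "slot_fst n i") (auto simp: row_start_Suc row_start_def)
  have "\<not> ?P (slot_fst n i - 1)"
    unfolding slot_fst_def by (rule not_less_Least) (use nonzero in \<open>simp add: slot_fst_def\<close>)
  then show "row_start n (slot_fst n i) \<le> i" using nonzero less by simp
qed

lemma edge_slots_nth:
  assumes "i < length (edge_slots n)"
  shows "edge_slots n ! i = (slot_fst n i, slot_snd n i)"
proof -
  let ?a = "slot_fst n i"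
  note a = slot_fst_bounds[OF assms]
  have offset: "i - row_start n ?a < n - ?a" using a by (simp add: row_start_Suc)
  have "[1..<Suc n] = [1..<?a] @ [?a..<Suc n]"
    using a by (metis le_SucI le_add_diff_inverse less_imp_le upt_add_eq_append)
  also have "[?a..<Suc n] = ?a # [Suc ?a..<Suc n]"
    using a by (simp add: upt_conv_Cons)
  finally have "[1..<Suc n] = [1..<?a] @ ?a # [Suc ?a..<Suc n]" .
  then have "edge_slots n = concat (map (slot_row n) [1..<?a]) @ slot_row n ?a @ concat (map (slot_row n) [Suc ?a..<Suc n])"
    unfolding edge_slots_eq_concat_rows by simp
  moreover have "i = length (concat (map (slot_row n) [1..<?a])) + (i - row_start n ?a)"
    using a length_rows_before[of n ?a] by simp
  ultimately have "edge_slots n ! i = (slot_row n ?a @ concat (map (slot_row n) [Suc ?a..<Suc n])) ! (i - row_start n ?a)"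
    by (metis nth_append_length_plus)
  also have "\<dots> = (?a, Suc ?a + (i - row_start n ?a))"
    using offset by (simp add: nth_append slot_row_def del: upt_Suc)
  finally show ?thesis by (simp add: slot_snd_def)
qed

lemma distinct_edge_slots: "distinct (edge_slots n)"
proof (subst distinct_conv_nth, intro allI impI)
  fix i j assume ij: "i < length (edge_slots n)" "j < length (edge_slots n)" "i \<noteq> j"
  show "edge_slots n ! i \<noteq> edge_slots n ! j"
  proof
    assume "edge_slots n ! i = edge_slots n ! j"
    then have "slot_fst n i = slot_fst n j" "slot_snd n i = slot_snd n j"
      using ij by (simp_all add: edge_slots_nth)
    then show False
      using ij slot_fst_bounds(3)[of i n] slot_fst_bounds(3)[of j n] by (simp add: slot_snd_def)
  qed
qed

lemma set_edge_slots: "set (edge_slots n) = {(a, b). 1 \<le> a \<and> a < b \<and> b \<le> n}"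
  unfolding edge_slots_def by force

lemma length_graph_code: "length (graph_code n adj) = n * (n - 1) div 2"
  by (simp add: graph_code_def length_edge_slots)

lemma graph_code_nth:
  "i < n * (n - 1) div 2 \<Longrightarrow> graph_code n adj ! i = adj (slot_fst n i) (slot_snd n i)"
  by (simp add: graph_code_def length_edge_slots edge_slots_nth)


section \<open>Compressing a graph in which two nodes have no common hub\<close>

text \<open>The hub pattern of \<open>u\<close> and \<open>v\<close> records, for each hub \<open>w\<close>, whether \<open>w\<close> is adjacent to
  \<open>u\<close> (digit 1), to \<open>v\<close> (digit 2) or to neither (digit 0). With \<open>w\<close> the bit width of \<open>n\<close>,
  \<open>q = w\<^sup>2 div 8\<close> and \<open>M = 5q - 1\<close>, its \<open>5q\<close> ternary digits fit in \<open>8q\<close> bits since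
  \<open>3^5 < 2^8\<close>, so the header holding it together with \<open>u\<close> and \<open>v\<close> has \<open>8q + 2w\<close> bits.\<close>

definition bit_width :: "nat \<Rightarrow> nat" where
  "bit_width n = (LEAST w. n < 2 ^ w)"

definition block_count :: "nat \<Rightarrow> nat" where
  "block_count n = bit_width n * bit_width n div 8"

definition hub_count :: "nat \<Rightarrow> nat" where
  "hub_count n = 5 * block_count n - 1"

definition header_length :: "nat \<Rightarrow> nat" where
  "header_length n = 8 * block_count n + 2 * bit_width n"

definition hub :: "nat \<Rightarrow> nat \<Rightarrow> nat \<Rightarrow> nat \<Rightarrow> bool" where
  "hub M u v w \<longleftrightarrow> 1 \<le> w \<and> w \<le> M \<and> w \<noteq> u \<and> w \<noteq> v"

definition hub_slot :: "nat \<Rightarrow> nat \<Rightarrow> nat \<Rightarrow> nat \<Rightarrow> nat \<Rightarrow> bool" where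
  "hub_slot M u v a b \<longleftrightarrow> ((a = u \<or> a = v) \<and> hub M u v b) \<or> ((b = u \<or> b = v) \<and> hub M u v a)"

definition hub_digit :: "(nat \<Rightarrow> nat \<Rightarrow> bool) \<Rightarrow> nat \<Rightarrow> nat \<Rightarrow> nat \<Rightarrow> nat" where
  "hub_digit adj u v w = (if adj u w then 1 else if adj v w then 2 else 0)"

definition hub_pattern :: "(nat \<Rightarrow> nat \<Rightarrow> bool) \<Rightarrow> nat \<Rightarrow> nat \<Rightarrow> nat \<Rightarrow> nat" where
  "hub_pattern adj M u v = (\<Sum>w<Suc M. hub_digit adj u v w * 3 ^ w)"

definition header :: "nat \<Rightarrow> (nat \<Rightarrow> nat \<Rightarrow> bool) \<Rightarrow> nat \<Rightarrow> nat \<Rightarrow> nat" where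
  "header n adj u v = (hub_pattern adj (hub_count n) u v * Suc n + u) * Suc n + v"

definition other_bits :: "nat \<Rightarrow> (nat \<Rightarrow> nat \<Rightarrow> bool) \<Rightarrow> nat \<Rightarrow> nat \<Rightarrow> bool list" where
  "other_bits n adj u v =
     map (\<lambda>(a, b). adj a b) (filter (\<lambda>(a, b). \<not> hub_slot (hub_count n) u v a b) (edge_slots n))"

definition compressed_code :: "nat \<Rightarrow> (nat \<Rightarrow> nat \<Rightarrow> bool) \<Rightarrow> nat \<Rightarrow> nat \<Rightarrow> bool list" where
  "compressed_code n adj u v = binary (header_length n) (header n adj u v) @ other_bits n adj u v"

text \<open>The decoder works on numbers: \<open>p\<close> is \<^const>\<open>bl2n\<close> of the compressed code, so that
  \<open>Suc p\<close> holds the header in its low bits and \<open>Suc (bl2n (other_bits n adj u v))\<close> above them.\<close>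

definition hub_slot_bit :: "nat \<Rightarrow> nat \<Rightarrow> nat \<Rightarrow> nat \<Rightarrow> nat \<Rightarrow> bool" where
  "hub_slot_bit u v t a b \<longleftrightarrow>
     (a = u \<and> t div 3 ^ b mod 3 = 1) \<or> (a = v \<and> t div 3 ^ b mod 3 = 2) \<or>
     (b = u \<and> t div 3 ^ a mod 3 = 1) \<or> (b = v \<and> t div 3 ^ a mod 3 = 2)"

definition hub_slots_before :: "nat \<Rightarrow> nat \<Rightarrow> nat \<Rightarrow> nat \<Rightarrow> nat" where
  "hub_slots_before n u v i = (\<Sum>j<i. of_bool (hub_slot (hub_count n) u v (slot_fst n j) (slot_snd n j)))"

definition slot_bit :: "nat \<Rightarrow> nat \<Rightarrow> nat \<Rightarrow> nat \<Rightarrow> nat \<Rightarrow> nat \<Rightarrow> bool" where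
  "slot_bit n u v t r i \<longleftrightarrow>
     (if hub_slot (hub_count n) u v (slot_fst n i) (slot_snd n i)
      then hub_slot_bit u v t (slot_fst n i) (slot_snd n i)
      else bit r (i - hub_slots_before n u v i))"

definition decompress_nat :: "nat \<Rightarrow> nat \<Rightarrow> nat" where
  "decompress_nat p n =
     (let x = Suc p mod 2 ^ header_length n; r = Suc p div 2 ^ header_length n
      in \<Sum>i < n * (n - 1) div 2.
           (if slot_bit n (x div Suc n mod Suc n) (x mod Suc n) (x div Suc n div Suc n) r i
            then 2 else 1) * 2 ^ i)"

lemma less_power_bit_width: "n < 2 ^ bit_width n"
  unfolding bit_width_def by (rule LeastI[of _ n]) simp

lemma mod_div_mult_add:
  fixes m :: nat
  assumes "b < m"
  shows "(a * m + b) mod m = b" and "(a * m + b) div m = a"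
  using assms by simp_all

lemma filter_nth_length_take:
  assumes "i < length xs" "P (xs ! i)"
  shows "length (filter P (take i xs)) < length (filter P xs)"
    and "filter P xs ! length (filter P (take i xs)) = xs ! i"
proof -
  have "filter P xs = filter P (take i xs) @ xs ! i # filter P (drop (Suc i) xs)"
    using assms by (subst id_take_nth_drop[OF assms(1)]) simp
  then show "length (filter P (take i xs)) < length (filter P xs)"
    and "filter P xs ! length (filter P (take i xs)) = xs ! i"
    by (simp_all add: nth_append)
qed

lemma hub_slots_before_eq:
  "i \<le> length (edge_slots n) \<Longrightarrow>
   hub_slots_before n u v i = length (filter (\<lambda>(a, b). hub_slot (hub_count n) u v a b) (take i (edge_slots n)))"
proof (induction i)
  case (Suc i)
  then have "take (Suc i) (edge_slots n) = take i (edge_slots n) @ [edge_slots n ! i]"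
    by (simp add: take_Suc_conv_app_nth)
  with Suc show ?case by (simp add: hub_slots_before_def edge_slots_nth)
qed (simp add: hub_slots_before_def)

locale no_common_hub =
  fixes n :: nat and adj :: "nat \<Rightarrow> nat \<Rightarrow> bool" and u v :: nat
  assumes graph: "is_graph n adj"
    and nodes: "u \<in> {1..n}" "v \<in> {1..n}" "u \<noteq> v"
    and hubs_are_nodes: "hub_count n \<le> n" and blocks: "1 \<le> block_count n"
    and no_common_hub: "\<And>w. hub (hub_count n) u v w \<Longrightarrow> \<not> (adj u w \<and> adj v w)"
begin

abbreviation "M \<equiv> hub_count n"

lemma header_less: "header n adj u v < 2 ^ header_length n"
proof -
  let ?t = "hub_pattern adj M u v"
  have "?t < 3 ^ Suc M"
    unfolding hub_pattern_def by (rule digit_sum_less) (simp add: hub_digit_def)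
  also have "(3::nat) ^ Suc M = 243 ^ block_count n"
    using blocks by (simp add: hub_count_def power_mult)
  also have "\<dots> \<le> 256 ^ block_count n"
    by (rule power_mono) simp_all
  also have "\<dots> = 2 ^ (8 * block_count n)"
    by (simp add: power_mult)
  finally have t: "Suc ?t \<le> 2 ^ (8 * block_count n)" by simp
  have n: "Suc n \<le> 2 ^ bit_width n" using less_power_bit_width[of n] by simp
  have "header n adj u v \<le> (?t * Suc n + n) * Suc n + n"
    unfolding header_def using nodes by (intro add_mono mult_right_mono) auto
  also have "\<dots> < Suc ?t * Suc n * Suc n"
    by (simp add: algebra_simps)
  also have "\<dots> \<le> 2 ^ (8 * block_count n) * 2 ^ bit_width n * 2 ^ bit_width n"
    using t n by (intro mult_mono) simp_all
  also have "\<dots> = 2 ^ header_length n"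
    by (simp only: header_length_def power_add mult_2 mult.assoc)
  finally show ?thesis .
qed

lemma hub_slot_bit_eq_adj:
  assumes "hub_slot M u v a b"
  shows "hub_slot_bit u v (hub_pattern adj M u v) a b \<longleftrightarrow> adj a b"
proof -
  have digit: "hub_pattern adj M u v div 3 ^ w mod 3 = hub_digit adj u v w" if "hub M u v w" for w
    unfolding hub_pattern_def using that by (subst digit_sum) (auto simp: hub_def hub_digit_def)
  have sym: "adj a b \<longleftrightarrow> adj b a" using graph unfolding is_graph_def by blast
  from assms consider "a = u" "hub M u v b" | "a = v" "hub M u v b" | "b = u" "hub M u v a" | "b = v" "hub M u v a"
    unfolding hub_slot_def by blast
  then show ?thesis
    using digit[of a] digit[of b] no_common_hub[of a] no_common_hub[of b] nodes(3) sym
    by cases (simp_all add: hub_slot_bit_def hub_digit_def hub_def)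
qed

lemma slot_bit_eq_graph_code_nth:
  assumes i: "i < n * (n - 1) div 2"
  shows "slot_bit n u v (hub_pattern adj M u v) (Suc (bl2n (other_bits n adj u v))) i \<longleftrightarrow> graph_code n adj ! i"
proof (cases "hub_slot M u v (slot_fst n i) (slot_snd n i)")
  case True
  then show ?thesis
    using i by (simp add: slot_bit_def hub_slot_bit_eq_adj graph_code_nth)
next
  case False
  let ?P = "\<lambda>(a, b). \<not> hub_slot M u v a b"
  have il: "i < length (edge_slots n)" and slot: "edge_slots n ! i = (slot_fst n i, slot_snd n i)"
    using i by (simp_all add: length_edge_slots edge_slots_nth)
  have "hub_slots_before n u v i + length (filter ?P (take i (edge_slots n))) = i"
    using il sum_length_filter_compl[of "\<lambda>(a, b). hub_slot M u v a b" "take i (edge_slots n)"]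
    by (simp add: hub_slots_before_eq case_prod_unfold)
  then have "i - hub_slots_before n u v i = length (filter ?P (take i (edge_slots n)))"
    by simp
  with filter_nth_length_take[of i "edge_slots n" ?P] il slot False show ?thesis
    by (simp add: slot_bit_def bit_Suc_bl2n other_bits_def graph_code_nth[OF i])
qed

lemma decompress_nat_compressed_code:
  "decompress_nat (bl2n (compressed_code n adj u v)) n = bl2n (graph_code n adj)"
proof -
  let ?x = "header n adj u v"
  have "u < Suc n" "v < Suc n" using nodes by auto
  then have "?x mod Suc n = v" "?x div Suc n mod Suc n = u" "?x div Suc n div Suc n = hub_pattern adj M u v"
    unfolding header_def by (simp_all only: mod_div_mult_add)
  then have "decompress_nat (bl2n (compressed_code n adj u v)) n =
    (\<Sum>i < n * (n - 1) div 2. (if slot_bit n u v (hub_pattern adj M u v) (Suc (bl2n (other_bits n adj u v))) i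
                               then 2 else 1) * 2 ^ i)"
    by (simp add: decompress_nat_def compressed_code_def Suc_bl2n_binary_append[OF header_less])
  also have "\<dots> = bl2n (graph_code n adj)"
    unfolding bl2n_eq_sum[of "graph_code n adj"] length_graph_code
    by (intro sum.cong refl) (simp add: slot_bit_eq_graph_code_nth)
  finally show ?thesis .
qed

lemma hub_slots_count:
  "2 * (M - 2) \<le> length (filter (\<lambda>(a, b). hub_slot M u v a b) (edge_slots n))"
proof -
  let ?W = "{w. hub M u v w}"
  let ?slot = "\<lambda>(x::nat, w::nat). (min x w, max x w)"
  have "M - 2 \<le> card ?W"
  proof -
    have "?W = {1..M} - {u, v}" by (auto simp: hub_def)
    then show ?thesis using diff_card_le_card_Diff[of "{u, v}" "{1..M}"] nodes by simp
  qed
  then have "2 * (M - 2) \<le> card ({u, v} \<times> ?W)"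
    using nodes by (simp add: card_cartesian_product)
  also have "\<dots> = card (?slot ` ({u, v} \<times> ?W))"
    by (rule card_image[symmetric]) (auto simp: inj_on_def hub_def min_def max_def)
  also have "\<dots> \<le> card (set (filter (\<lambda>(a, b). hub_slot M u v a b) (edge_slots n)))"
  proof (rule card_mono[OF finite_set], rule subsetI)
    fix p assume "p \<in> ?slot ` ({u, v} \<times> ?W)"
    then obtain x w where p: "p = ?slot (x, w)" and x: "x \<in> {u, v}" and w: "hub M u v w"
      by blast
    then have "x \<noteq> w" "1 \<le> x" "x \<le> n" "1 \<le> w" "w \<le> n"
      using nodes hubs_are_nodes by (auto simp: hub_def)
    then have "(min x w, max x w) \<in> set (edge_slots n)"
      by (auto simp: set_edge_slots min_def max_def)
    moreover have "hub_slot M u v (min x w) (max x w)"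
      using x w by (auto simp: hub_slot_def min_def max_def)
    ultimately show "p \<in> set (filter (\<lambda>(a, b). hub_slot M u v a b) (edge_slots n))"
      using p by simp
  qed
  also have "\<dots> = length (filter (\<lambda>(a, b). hub_slot M u v a b) (edge_slots n))"
    by (intro distinct_card distinct_filter distinct_edge_slots)
  finally show ?thesis .
qed

lemma length_compressed_code:
  "length (compressed_code n adj u v) + 2 * (M - 2) \<le> header_length n + n * (n - 1) div 2"
  using hub_slots_count
    sum_length_filter_compl[of "\<lambda>(a, b). hub_slot M u v a b" "edge_slots n"]
  by (simp add: compressed_code_def other_bits_def length_edge_slots case_prod_unfold)

end


section \<open>The decompressor is computable\<close>

lemma total_recursive_of_bool [recursive_intros]:
  "decidable k P \<Longrightarrow> total_recursive k (\<lambda>xs. of_bool (P xs))"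
  by (simp add: decidable_def)

lemma total_recursive_bit_width [recursive_intros]:
  "total_recursive k a \<Longrightarrow> total_recursive k (\<lambda>xs. bit_width (a xs))"
proof -
  have "total_recursive 1 (\<lambda>xs. bit_width (xs ! 0))"
    unfolding bit_width_def
  proof (rule total_recursive_cong[OF total_recursive_least[where P = "\<lambda>zs. zs ! 1 < 2 ^ zs ! 0"]])
    show "decidable (Suc 1) (\<lambda>zs. zs ! 1 < 2 ^ zs ! 0)"
      by (rule recursive_intros | (simp; fail))+
    show "\<exists>w. (w # xs) ! 1 < 2 ^ (w # xs) ! 0" for xs :: "nat list"
      by (rule exI[of _ "xs ! 0"]) simp
  qed simp
  then show "total_recursive k a \<Longrightarrow> total_recursive k (\<lambda>xs. bit_width (a xs))"
    by (rule total_recursive_comp1)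
qed

lemma total_recursive_header_length [recursive_intros]:
  "total_recursive k a \<Longrightarrow> total_recursive k (\<lambda>xs. header_length (a xs))"
  and total_recursive_hub_count [recursive_intros]:
  "total_recursive k a \<Longrightarrow> total_recursive k (\<lambda>xs. hub_count (a xs))"
  unfolding header_length_def hub_count_def block_count_def by (rule recursive_intros | assumption)+

lemma total_recursive_row_start [recursive_intros]:
  "total_recursive k a \<Longrightarrow> total_recursive k b \<Longrightarrow> total_recursive k (\<lambda>xs. row_start (a xs) (b xs))"
proof -
  have "total_recursive 2 (\<lambda>xs. \<Sum>j<xs ! 1. (\<lambda>ys. if ys ! 0 = 0 then 0 else ys ! 1 - ys ! 0) (j # xs))"
    by (rule total_recursive_sum) (rule recursive_intros | (simp; fail))+
  then have "total_recursive 2 (\<lambda>xs. row_start (xs ! 0) (xs ! 1))"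
    by (rule total_recursive_cong) (simp add: row_start_def cong: if_cong)
  then show "total_recursive k a \<Longrightarrow> total_recursive k b \<Longrightarrow> total_recursive k (\<lambda>xs. row_start (a xs) (b xs))"
    by (rule total_recursive_comp2)
qed

lemma total_recursive_slot_fst [recursive_intros]:
  "total_recursive k a \<Longrightarrow> total_recursive k b \<Longrightarrow> total_recursive k (\<lambda>xs. slot_fst (a xs) (b xs))"
proof -
  let ?P = "\<lambda>zs. zs ! 1 \<le> zs ! 0 \<or> zs ! 2 < row_start (zs ! 1) (Suc (zs ! 0))"
  have "total_recursive 2 (\<lambda>xs. LEAST a. ?P (a # xs))"
  proof (rule total_recursive_least)
    show "decidable (Suc 2) ?P"
      by (rule recursive_intros | (simp; fail))+
    show "\<exists>a. ?P (a # xs)" for xs :: "nat list"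
      by (rule exI[of _ "xs ! 0"]) simp
  qed
  then have "total_recursive 2 (\<lambda>xs. slot_fst (xs ! 0) (xs ! 1))"
    by (rule total_recursive_cong) (simp add: slot_fst_def)
  then show "total_recursive k a \<Longrightarrow> total_recursive k b \<Longrightarrow> total_recursive k (\<lambda>xs. slot_fst (a xs) (b xs))"
    by (rule total_recursive_comp2)
qed

lemma total_recursive_slot_snd [recursive_intros]:
  "total_recursive k a \<Longrightarrow> total_recursive k b \<Longrightarrow> total_recursive k (\<lambda>xs. slot_snd (a xs) (b xs))"
  unfolding slot_snd_def by (rule recursive_intros | assumption)+

lemma decidable_hub_slot [recursive_intros]:
  "total_recursive k m \<Longrightarrow> total_recursive k u \<Longrightarrow> total_recursive k v \<Longrightarrow>
   total_recursive k a \<Longrightarrow> total_recursive k b \<Longrightarrow> decidable k (\<lambda>xs. hub_slot (m xs) (u xs) (v xs) (a xs) (b xs))"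
  unfolding hub_slot_def hub_def by (rule recursive_intros | assumption)+

lemma decidable_hub_slot_bit [recursive_intros]:
  "total_recursive k u \<Longrightarrow> total_recursive k v \<Longrightarrow> total_recursive k t \<Longrightarrow>
   total_recursive k a \<Longrightarrow> total_recursive k b \<Longrightarrow> decidable k (\<lambda>xs. hub_slot_bit (u xs) (v xs) (t xs) (a xs) (b xs))"
  unfolding hub_slot_bit_def by (rule recursive_intros | assumption)+

lemma total_recursive_hub_slots_before [recursive_intros]:
  "total_recursive k n \<Longrightarrow> total_recursive k u \<Longrightarrow> total_recursive k v \<Longrightarrow> total_recursive k i \<Longrightarrow>
   total_recursive k (\<lambda>xs. hub_slots_before (n xs) (u xs) (v xs) (i xs))"
proof -
  have "total_recursive 4 (\<lambda>xs. \<Sum>j<xs ! 3. (\<lambda>ys. of_bool (hub_slot (hub_count (ys ! 1)) (ys ! 2) (ys ! 3)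
      (slot_fst (ys ! 1) (ys ! 0)) (slot_snd (ys ! 1) (ys ! 0)))) (j # xs))"
    by (rule total_recursive_sum) (rule recursive_intros | (simp; fail))+
  then have "total_recursive 4 (\<lambda>xs. hub_slots_before (xs ! 0) (xs ! 1) (xs ! 2) (xs ! 3))"
    by (rule total_recursive_cong) (simp add: hub_slots_before_def)
  then show "total_recursive k n \<Longrightarrow> total_recursive k u \<Longrightarrow> total_recursive k v \<Longrightarrow> total_recursive k i \<Longrightarrow>
      total_recursive k (\<lambda>xs. hub_slots_before (n xs) (u xs) (v xs) (i xs))"
    by (rule total_recursive_comp4)
qed

lemma decidable_slot_bit [recursive_intros]:
  "total_recursive k n \<Longrightarrow> total_recursive k u \<Longrightarrow> total_recursive k v \<Longrightarrow>
   total_recursive k t \<Longrightarrow> total_recursive k r \<Longrightarrow> total_recursive k i \<Longrightarrow>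
   decidable k (\<lambda>xs. slot_bit (n xs) (u xs) (v xs) (t xs) (r xs) (i xs))"
  unfolding slot_bit_def
  by (rule recursive_intros | assumption)+

lemma total_recursive_decompress_nat: "total_recursive 2 (\<lambda>xs. decompress_nat (xs ! 0) (xs ! 1))"
proof -
  let ?x = "\<lambda>ys. Suc (ys ! 1) mod 2 ^ header_length (ys ! 2)"
  have "total_recursive 2 (\<lambda>xs. \<Sum>i < xs ! 1 * (xs ! 1 - 1) div 2.
    (\<lambda>ys. (if slot_bit (ys ! 2) (?x ys div Suc (ys ! 2) mod Suc (ys ! 2)) (?x ys mod Suc (ys ! 2))
             (?x ys div Suc (ys ! 2) div Suc (ys ! 2)) (Suc (ys ! 1) div 2 ^ header_length (ys ! 2)) (ys ! 0)
           then 2 else 1) * 2 ^ ys ! 0) (i # xs))"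
    by (rule total_recursive_sum) (rule recursive_intros | (simp; fail))+
  then show ?thesis
    by (rule total_recursive_cong) (simp add: decompress_nat_def Let_def)
qed

definition decompress :: "bool list \<Rightarrow> nat \<Rightarrow> bool list option" where
  "decompress p n = Some (inv bl2n (decompress_nat (bl2n p) n))"

lemma computable_decompress: "computable_descr decompress"
proof -
  obtain t where t: "\<And>xs r. length xs = 2 \<Longrightarrow> eval t xs r \<longleftrightarrow> r = decompress_nat (xs ! 0) (xs ! 1)"
    using total_recursive_decompress_nat by (rule total_recursiveE) blast
  have "decompress p n = Some x \<longleftrightarrow> bl2n x = decompress_nat (bl2n p) n" for p n x
    unfolding decompress_def by (metis bl2n_inv inv_bl2n option.inject)
  then have "decompress p n = Some x \<longleftrightarrow> eval t [bl2n p, n] (bl2n x)" for p n x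
    using t[of "[bl2n p, n]" "bl2n x"] by simp
  then show ?thesis unfolding computable_descr_def by blast
qed

lemma KC_le: "U p y = Some x \<Longrightarrow> KC U x y \<le> length p"
  unfolding KC_def by (rule Least_le) blast

lemma graph_code_compressible:
  assumes "universal U"
  obtains k where "\<And>n adj u v. no_common_hub n adj u v \<Longrightarrow>
    KC U (graph_code n adj) n + 2 * (hub_count n - 2) \<le> header_length n + n * (n - 1) div 2 + k"
proof -
  obtain k where k: "\<And>p y x. decompress p y = Some x \<Longrightarrow> \<exists>q. U q y = Some x \<and> length q \<le> length p + k"
    using assms computable_decompress unfolding universal_def by blast
  have "KC U (graph_code n adj) n + 2 * (hub_count n - 2) \<le> header_length n + n * (n - 1) div 2 + k"
    if "no_common_hub n adj u v" for n adj u v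
  proof -
    have "decompress (compressed_code n adj u v) n = Some (graph_code n adj)"
      using no_common_hub.decompress_nat_compressed_code[OF that] by (simp add: decompress_def)
    then obtain q where "U q n = Some (graph_code n adj)" "length q \<le> length (compressed_code n adj u v) + k"
      using k by blast
    then show ?thesis
      using KC_le no_common_hub.length_compressed_code[OF that] by fastforce
  qed
  then show ?thesis by (rule that)
qed


section \<open>The routing scheme\<close>

text \<open>The router receives the neighbour labels as the number \<open>list_encode (map bl2n ls)\<close>;
  \<open>code_list_drop i\<close> computes the code of its \<open>i\<close>-th tail, which is \<open>0\<close> once the list is
  exhausted.\<close>

definition hub_mask :: "(nat \<Rightarrow> nat \<Rightarrow> bool) \<Rightarrow> nat \<Rightarrow> nat \<Rightarrow> nat" where
  "hub_mask adj M v = (\<Sum>w<Suc M. of_bool (adj v w) * 2 ^ w)"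

definition routing_label :: "(nat \<Rightarrow> nat \<Rightarrow> bool) \<Rightarrow> nat \<Rightarrow> nat \<Rightarrow> bool list" where
  "routing_label adj M v = inv bl2n (prod_encode (v, hub_mask adj M v))"

definition code_list_drop :: "nat \<Rightarrow> nat \<Rightarrow> nat" where
  "code_list_drop i c = ((\<lambda>c. snd (prod_decode (c - 1))) ^^ i) c"

definition code_list_nth :: "nat \<Rightarrow> nat \<Rightarrow> nat" where
  "code_list_nth c i = fst (prod_decode (code_list_drop i c - 1))"

definition port_of :: "nat \<Rightarrow> nat \<Rightarrow> nat" where
  "port_of c d = (LEAST i. code_list_drop i c = 0 \<or> code_list_nth c i = d)"

definition port_to_hub_of :: "nat \<Rightarrow> nat \<Rightarrow> nat" where
  "port_to_hub_of c d =
     (LEAST i. code_list_drop i c = 0 \<or> bit (snd (prod_decode d)) (fst (prod_decode (code_list_nth c i))))"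

definition route_port :: "nat \<Rightarrow> nat \<Rightarrow> nat" where
  "route_port c d =
     (if code_list_drop (port_of c d) c \<noteq> 0 then Suc (port_of c d)
      else if code_list_drop (port_to_hub_of c d) c \<noteq> 0 then Suc (port_to_hub_of c d)
      else 0)"

definition router :: "bool list \<Rightarrow> bool list \<Rightarrow> bool list list \<Rightarrow> bool list \<Rightarrow> nat" where
  "router bits label neighbour_labels destination =
     route_port (list_encode (map bl2n neighbour_labels)) (bl2n destination)"

lemma bit_hub_mask: "bit (hub_mask adj M v) w \<longleftrightarrow> w \<le> M \<and> adj v w"
proof -
  have "hub_mask adj M v div 2 ^ w mod 2 = (if w < Suc M then of_bool (adj v w) else 0)"
    unfolding hub_mask_def by (rule digit_sum) auto
  then show ?thesis by (auto simp: bit_iff_odd odd_iff_mod_2_eq_one split: if_splits)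
qed

lemma hub_mask_less: "hub_mask adj M v < 2 ^ Suc M"
  unfolding hub_mask_def by (rule digit_sum_less) simp

lemma list_encode_eq_0: "list_encode xs = 0 \<longleftrightarrow> xs = []"
  by (cases xs) simp_all

lemma code_list_drop_list_encode: "code_list_drop i (list_encode xs) = list_encode (drop i xs)"
proof (induction i arbitrary: xs)
  case (Suc i)
  have "prod_decode 0 = (0, 0)"
    using prod_encode_inverse[of "(0, 0)"] by (simp add: prod_encode_def)
  then have "snd (prod_decode (list_encode xs - 1)) = list_encode (tl xs)"
    by (cases xs) simp_all
  then show ?case
    using Suc[of "tl xs"] by (simp add: code_list_drop_def funpow_Suc_right drop_Suc del: funpow.simps)
qed (simp add: code_list_drop_def)

lemma code_list_nth_list_encode: "i < length xs \<Longrightarrow> code_list_nth (list_encode xs) i = xs ! i"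
  by (simp add: code_list_nth_def code_list_drop_list_encode Cons_nth_drop_Suc[symmetric])

lemma code_list_drop_self: "code_list_drop c c = 0"
proof -
  have tail: "snd (prod_decode z) \<le> z" for z
    by (metis le_prod_encode_2 prod.collapse prod_decode_inverse)
  have "code_list_drop i c \<le> c - i" for i
  proof (induction i)
    case (Suc i)
    have "code_list_drop (Suc i) c = snd (prod_decode (code_list_drop i c - 1))"
      by (simp add: code_list_drop_def)
    then show ?case using tail[of "code_list_drop i c - 1"] Suc.IH by linarith
  qed (simp add: code_list_drop_def)
  from this[of c] show ?thesis by simp
qed

lemma least_index_list_encode:
  "(LEAST i. code_list_drop i (list_encode cs) = 0 \<or> P (code_list_nth (list_encode cs) i)) =
   (LEAST i. length cs \<le> i \<or> P (cs ! i))"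
proof -
  have "code_list_drop i (list_encode cs) = 0 \<or> P (code_list_nth (list_encode cs) i) \<longleftrightarrow>
        length cs \<le> i \<or> P (cs ! i)" for i
    by (cases "i < length cs")
      (simp_all add: code_list_drop_list_encode code_list_nth_list_encode list_encode_eq_0)
  then show ?thesis by simp
qed

lemma least_index_found:
  fixes len :: nat
  assumes "\<exists>i<len. P i"
  shows "(LEAST i. len \<le> i \<or> P i) < len" and "P (LEAST i. len \<le> i \<or> P i)"
proof -
  from assms obtain i where i: "i < len" "P i" by blast
  have le: "(LEAST i. len \<le> i \<or> P i) \<le> i"
    by (rule Least_le) (use i in simp)
  have "len \<le> (LEAST i. len \<le> i \<or> P i) \<or> P (LEAST i. len \<le> i \<or> P i)"
    by (rule LeastI[of _ i]) (use i in simp)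
  with le i show "(LEAST i. len \<le> i \<or> P i) < len" and "P (LEAST i. len \<le> i \<or> P i)"
    by auto
qed

lemma least_index_not_found:
  fixes len :: nat
  assumes "\<not> (\<exists>i<len. P i)"
  shows "(LEAST i. len \<le> i \<or> P i) = len"
  by (rule Least_equality) (use assms in \<open>auto simp: not_less[symmetric]\<close>)

lemma route_port_direct:
  assumes "d \<in> set cs"
  obtains i where "i < length cs" "route_port (list_encode cs) d = Suc i" "cs ! i = d"
proof -
  let ?i = "LEAST i. length cs \<le> i \<or> cs ! i = d"
  have "\<exists>i<length cs. cs ! i = d" using assms by (simp add: in_set_conv_nth)
  then have "?i < length cs" "cs ! ?i = d" by (rule least_index_found)+
  moreover have "port_of (list_encode cs) d = ?i"
    unfolding port_of_def by (rule least_index_list_encode)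
  ultimately show ?thesis
    by (intro that) (simp_all add: route_port_def code_list_drop_list_encode list_encode_eq_0)
qed

lemma route_port_via_hub:
  assumes "d \<notin> set cs" and "\<exists>i<length cs. bit (snd (prod_decode d)) (fst (prod_decode (cs ! i)))"
  obtains i where "i < length cs" "route_port (list_encode cs) d = Suc i"
    "bit (snd (prod_decode d)) (fst (prod_decode (cs ! i)))"
proof -
  let ?i = "LEAST i. length cs \<le> i \<or> bit (snd (prod_decode d)) (fst (prod_decode (cs ! i)))"
  have "?i < length cs" "bit (snd (prod_decode d)) (fst (prod_decode (cs ! ?i)))"
    using assms(2) by (rule least_index_found)+
  moreover have "port_to_hub_of (list_encode cs) d = ?i"
    unfolding port_to_hub_of_def by (rule least_index_list_encode)
  moreover have "port_of (list_encode cs) d = length cs"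
    unfolding port_of_def least_index_list_encode[where P = "\<lambda>x. x = d"]
    by (rule least_index_not_found) (use assms(1) in \<open>auto simp: in_set_conv_nth\<close>)
  ultimately show ?thesis
    by (intro that) (simp_all add: route_port_def code_list_drop_list_encode list_encode_eq_0)
qed


definition prod_decode_sum :: "nat \<Rightarrow> nat" where
  "prod_decode_sum z = (LEAST s. z < triangle (Suc s))"

lemma prod_decode_eq_sum:
  "prod_decode z = (z - triangle (prod_decode_sum z), prod_decode_sum z - (z - triangle (prod_decode_sum z)))"
proof -
  obtain a b where ab: "prod_decode z = (a, b)" by fastforce
  then have z: "z = triangle (a + b) + a"
    using prod_decode_inverse[of z] by (simp add: prod_encode_def)
  have "prod_decode_sum z = a + b"
    unfolding prod_decode_sum_def
  proof (rule Least_equality)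
    show "z < triangle (Suc (a + b))" using z by simp
    show "a + b \<le> s" if "z < triangle (Suc s)" for s
    proof (rule ccontr)
      assume "\<not> a + b \<le> s"
      then have "triangle (Suc s) \<le> triangle (a + b)"
        unfolding triangle_def by (intro div_le_mono mult_le_mono) simp_all
      with that z show False by simp
    qed
  qed
  with z ab show ?thesis by simp
qed

lemma total_recursive_prod_decode [recursive_intros]:
  "total_recursive k a \<Longrightarrow> total_recursive k (\<lambda>xs. fst (prod_decode (a xs)))"
  "total_recursive k a \<Longrightarrow> total_recursive k (\<lambda>xs. snd (prod_decode (a xs)))"
proof -
  have "total_recursive 1 (\<lambda>xs. LEAST s. (s # xs) ! 1 < triangle (Suc ((s # xs) ! 0)))"
  proof (rule total_recursive_least)
    show "decidable (Suc 1) (\<lambda>zs. zs ! 1 < triangle (Suc (zs ! 0)))"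
      unfolding triangle_def by (rule recursive_intros | (simp; fail))+
    show "\<exists>s. (s # xs) ! 1 < triangle (Suc ((s # xs) ! 0))" for xs :: "nat list"
      by (rule exI[of _ "xs ! 0"]) (simp add: triangle_def)
  qed
  then have "total_recursive 1 (\<lambda>xs. prod_decode_sum (xs ! 0))"
    by (rule total_recursive_cong) (simp add: prod_decode_sum_def)
  then have sum: "total_recursive k (\<lambda>xs. prod_decode_sum (a xs))" if "total_recursive k a" for k a
    using that by (rule total_recursive_comp1)
  show "total_recursive k a \<Longrightarrow> total_recursive k (\<lambda>xs. fst (prod_decode (a xs)))"
    and "total_recursive k a \<Longrightarrow> total_recursive k (\<lambda>xs. snd (prod_decode (a xs)))"
    unfolding prod_decode_eq_sum prod.sel triangle_def
    by (rule recursive_intros sum | assumption)+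
qed

lemma total_recursive_code_list_drop [recursive_intros]:
  "total_recursive k i \<Longrightarrow> total_recursive k c \<Longrightarrow> total_recursive k (\<lambda>xs. code_list_drop (i xs) (c xs))"
proof -
  have "total_recursive 1 (\<lambda>ys. snd (prod_decode (ys ! 0 - 1)))"
    by (rule recursive_intros | (simp; fail))+
  then have "total_recursive 2 (\<lambda>xs. code_list_drop (xs ! 0) (xs ! 1))"
    unfolding code_list_drop_def by (rule total_recursive_funpow)
  then show "total_recursive k i \<Longrightarrow> total_recursive k c \<Longrightarrow> total_recursive k (\<lambda>xs. code_list_drop (i xs) (c xs))"
    by (rule total_recursive_comp2)
qed

lemma total_recursive_code_list_nth [recursive_intros]:
  "total_recursive k c \<Longrightarrow> total_recursive k i \<Longrightarrow> total_recursive k (\<lambda>xs. code_list_nth (c xs) (i xs))"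
  unfolding code_list_nth_def by (rule recursive_intros | assumption)+

lemma total_recursive_port_of [recursive_intros]:
  "total_recursive k c \<Longrightarrow> total_recursive k d \<Longrightarrow> total_recursive k (\<lambda>xs. port_of (c xs) (d xs))"
proof -
  let ?P = "\<lambda>zs. code_list_drop (zs ! 0) (zs ! 1) = 0 \<or> code_list_nth (zs ! 1) (zs ! 0) = zs ! 2"
  have "total_recursive 2 (\<lambda>xs. LEAST i. ?P (i # xs))"
  proof (rule total_recursive_least)
    show "decidable (Suc 2) ?P" by (rule recursive_intros | (simp; fail))+
    show "\<exists>i. ?P (i # xs)" for xs :: "nat list"
      by (rule exI[of _ "xs ! 0"]) (simp add: code_list_drop_self)
  qed
  then have "total_recursive 2 (\<lambda>xs. port_of (xs ! 0) (xs ! 1))"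
    by (rule total_recursive_cong) (simp add: port_of_def)
  then show "total_recursive k c \<Longrightarrow> total_recursive k d \<Longrightarrow> total_recursive k (\<lambda>xs. port_of (c xs) (d xs))"
    by (rule total_recursive_comp2)
qed

lemma total_recursive_port_to_hub_of [recursive_intros]:
  "total_recursive k c \<Longrightarrow> total_recursive k d \<Longrightarrow> total_recursive k (\<lambda>xs. port_to_hub_of (c xs) (d xs))"
proof -
  let ?P = "\<lambda>zs. code_list_drop (zs ! 0) (zs ! 1) = 0 \<or>
    bit (snd (prod_decode (zs ! 2))) (fst (prod_decode (code_list_nth (zs ! 1) (zs ! 0))))"
  have "total_recursive 2 (\<lambda>xs. LEAST i. ?P (i # xs))"
  proof (rule total_recursive_least)
    show "decidable (Suc 2) ?P" by (rule recursive_intros | (simp; fail))+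
    show "\<exists>i. ?P (i # xs)" for xs :: "nat list"
      by (rule exI[of _ "xs ! 0"]) (simp add: code_list_drop_self)
  qed
  then have "total_recursive 2 (\<lambda>xs. port_to_hub_of (xs ! 0) (xs ! 1))"
    by (rule total_recursive_cong) (simp add: port_to_hub_of_def)
  then show "total_recursive k c \<Longrightarrow> total_recursive k d \<Longrightarrow> total_recursive k (\<lambda>xs. port_to_hub_of (c xs) (d xs))"
    by (rule total_recursive_comp2)
qed

lemma computable_router: "computable_router router"
proof -
  have "total_recursive 4 (\<lambda>xs. route_port (xs ! 2) (xs ! 3))"
    unfolding route_port_def by (rule recursive_intros | (simp; fail))+
  then obtain t where t: "\<And>xs r. length xs = 4 \<Longrightarrow> eval t xs r \<longleftrightarrow> r = route_port (xs ! 2) (xs ! 3)"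
    by (rule total_recursiveE) blast
  have "router a b cs d = r \<longleftrightarrow> eval t [bl2n a, bl2n b, list_encode (map bl2n cs), bl2n d] r" for a b cs d r
    using t[of "[bl2n a, bl2n b, list_encode (map bl2n cs), bl2n d]" r] by (auto simp: router_def)
  then show ?thesis unfolding computable_router_def by blast
qed

lemma length_routing_label:
  assumes "v < 2 ^ Suc M"
  shows "length (routing_label adj M v) \<le> 2 * M + 4"
proof -
  let ?s = "v + hub_mask adj M v"
  have "Suc ?s \<le> 2 ^ (M + 2)"
    using assms hub_mask_less[of adj M v] by simp
  moreover have "Suc (prod_encode (v, hub_mask adj M v)) \<le> Suc ?s * Suc ?s"
    by (simp add: prod_encode_def triangle_def)
  ultimately have "Suc (prod_encode (v, hub_mask adj M v)) \<le> 2 ^ (M + 2) * 2 ^ (M + 2)"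
    by (meson le_trans mult_le_mono)
  also have "\<dots> = 2 ^ ((M + 2) + (M + 2))"
    by (rule power_add[symmetric])
  finally have "2 ^ length (routing_label adj M v) \<le> (2::nat) ^ ((M + 2) + (M + 2))"
    using two_power_length_le_bl2n[of "routing_label adj M v"] by (simp add: routing_label_def)
  then have "length (routing_label adj M v) \<le> (M + 2) + (M + 2)"
    by (rule power_le_imp_le_exp[rotated]) simp
  then show ?thesis by simp
qed

locale hub_routing =
  fixes n :: nat and adj :: "nat \<Rightarrow> nat \<Rightarrow> bool" and ports :: "nat \<Rightarrow> nat list" and M :: nat
  assumes graph: "is_graph n adj" and ports: "valid_ports n adj ports"
    and common_hub: "\<And>u v. u \<in> {1..n} \<Longrightarrow> v \<in> {1..n} \<Longrightarrow> u \<noteq> v \<Longrightarrow> \<not> adj u v \<Longrightarrow>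
      \<exists>w \<le> M. adj u w \<and> adj v w"
begin

abbreviation "label \<equiv> routing_label adj M"
abbreviation "no_bits \<equiv> \<lambda>u :: nat. [] :: bool list"
abbreviation "hop \<equiv> next_hop router ports label no_bits"

lemma adjacent_nodes: "adj a b \<Longrightarrow> a \<in> {1..n} \<and> b \<in> {1..n} \<and> a \<noteq> b \<and> adj b a"
  using graph unfolding is_graph_def by blast

lemma router_step:
  assumes u: "u \<in> {1..n}" and v: "v \<in> {1..n}" and "u \<noteq> v"
  obtains i where "i < length (ports u)"
    "router (no_bits u) (label u) (map label (ports u)) (label v) = Suc i"
    "adj u v \<Longrightarrow> ports u ! i = v" "\<not> adj u v \<Longrightarrow> adj (ports u ! i) v"
proof -
  let ?code = "\<lambda>w. prod_encode (w, hub_mask adj M w)"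
  let ?cs = "map ?code (ports u)"
  have set_ports: "set (ports u) = {w. adj u w}"
    using ports u unfolding valid_ports_def by blast
  have router: "router (no_bits u) (label u) (map label (ports u)) (label v) = route_port (list_encode ?cs) (?code v)"
    by (simp add: router_def routing_label_def comp_def)
  show ?thesis
  proof (cases "adj u v")
    case True
    then have "?code v \<in> set ?cs" using set_ports by simp
    then obtain i where "i < length ?cs" "route_port (list_encode ?cs) (?code v) = Suc i" "?cs ! i = ?code v"
      by (rule route_port_direct)
    with True show ?thesis by (intro that[of i]) (simp_all add: router)
  next
    case False
    then have not_in: "?code v \<notin> set ?cs" using set_ports by auto
    obtain w where w: "w \<le> M" "adj u w" "adj v w" using common_hub[OF u v \<open>u \<noteq> v\<close> False] by blast
    then obtain j where "j < length (ports u)" "ports u ! j = w"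
      using set_ports by (metis in_set_conv_nth mem_Collect_eq)
    then have "\<exists>j<length ?cs. bit (snd (prod_decode (?code v))) (fst (prod_decode (?cs ! j)))"
      using w by (auto simp: bit_hub_mask)
    with not_in obtain i where i: "i < length ?cs" "route_port (list_encode ?cs) (?code v) = Suc i"
      "bit (snd (prod_decode (?code v))) (fst (prod_decode (?cs ! i)))"
      by (rule route_port_via_hub)
    then have "adj v (ports u ! i)" by (simp add: bit_hub_mask)
    then have "adj (ports u ! i) v" using adjacent_nodes by blast
    with i False show ?thesis by (intro that[of i]) (simp_all add: router)
  qed
qed

lemma hop_step:
  assumes "u \<in> {1..n}" "v \<in> {1..n}" "u \<noteq> v"
  shows "adj u (hop v u)" and "adj u v \<Longrightarrow> hop v u = v" and "\<not> adj u v \<Longrightarrow> adj (hop v u) v"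
proof -
  obtain i where i: "i < length (ports u)"
    "router (no_bits u) (label u) (map label (ports u)) (label v) = Suc i"
    "adj u v \<Longrightarrow> ports u ! i = v" "\<not> adj u v \<Longrightarrow> adj (ports u ! i) v"
    using router_step[OF assms] by blast
  then have "hop v u = ports u ! i" by (simp add: next_hop_def)
  moreover have "adj u (ports u ! i)"
    using ports assms(1) i(1) nth_mem unfolding valid_ports_def by blast
  ultimately show "adj u (hop v u)" "adj u v \<Longrightarrow> hop v u = v" "\<not> adj u v \<Longrightarrow> adj (hop v u) v"
    using i by simp_all
qed

lemma shortest_path_routing: "shortest_path_routing n adj hop"
  unfolding shortest_path_routing_def
proof (intro ballI impI)
  fix u v assume u: "u \<in> {1..n}" and v: "v \<in> {1..n}" and "u \<noteq> v"
  have no_walk0: "\<not> walk adj 0 u v" using \<open>u \<noteq> v\<close> by (auto elim: walk.cases)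
  show "\<exists>d. is_dist adj u v d \<and> (\<forall>i<d. adj ((hop v ^^ i) u) ((hop v ^^ Suc i) u)) \<and> (hop v ^^ d) u = v"
  proof (cases "adj u v")
    case True
    then have "is_dist adj u v 1"
      using no_walk0 by (auto simp: is_dist_def intro: walk.intros)
    with True show ?thesis
      using hop_step[OF u v \<open>u \<noteq> v\<close>] by (intro exI[of _ 1]) simp
  next
    case False
    let ?w = "hop v u"
    have w: "adj u ?w" "adj ?w v" using hop_step[OF u v \<open>u \<noteq> v\<close>] False by simp_all
    then have "?w \<in> {1..n}" "?w \<noteq> v" using adjacent_nodes by blast+
    then have w_v: "hop v ?w = v" using hop_step[OF _ v] w(2) by blast
    have "\<not> walk adj (Suc 0) u v" using False by (auto elim!: walk.cases)
    then have "is_dist adj u v 2"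
      using w no_walk0 by (auto simp: is_dist_def numeral_2_eq_2 less_Suc_eq intro!: walk.intros)
    with w w_v show ?thesis
      by (intro exI[of _ 2]) (auto simp: numeral_2_eq_2 less_Suc_eq)
  qed
qed

lemma routes_by_ports: "routes_by_ports n router ports label no_bits"
  unfolding routes_by_ports_def
proof (intro ballI impI)
  fix u v assume "u \<in> {1..n}" "v \<in> {1..n}" "u \<noteq> v"
  then obtain i where "i < length (ports u)"
    "router (no_bits u) (label u) (map label (ports u)) (label v) = Suc i"
    by (rule router_step)
  then show "router (no_bits u) (label u) (map label (ports u)) (label v) \<in> {1..length (ports u)}"
    by simp
qed

lemma total_space_le:
  fixes B :: real
  assumes "\<forall>u\<in>{1..n}. real (length (label u)) \<le> B"
  shows "real (\<Sum>u\<in>{1..n}. length (no_bits u) + length (label u)) \<le> n * B"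
proof -
  have "real (\<Sum>u\<in>{1..n}. length (no_bits u) + length (label u)) = (\<Sum>u\<in>{1..n}. real (length (label u)))"
    by simp
  also have "\<dots> \<le> (\<Sum>u\<in>{1..n}. B)"
    using assms by (intro sum_mono) simp
  finally show ?thesis by simp
qed

lemma inj_label: "inj_on label {1..n}"
  by (rule inj_onI) (metis bl2n_inv prod.inject prod_encode_eq routing_label_def)

end


section \<open>Large random graphs\<close>

lemma less_bit_width_if_power_le: "2 ^ W \<le> n \<Longrightarrow> W < bit_width n"
  using less_power_bit_width[of n] by (metis leD le_less_trans nat_power_less_imp_less not_le zero_less_numeral)

lemma power_bit_width_minus_1_le: "1 \<le> n \<Longrightarrow> 2 ^ (bit_width n - 1) \<le> n"
proof -
  assume "1 \<le> n"
  then have "bit_width n \<noteq> 0" using less_power_bit_width[of n] by (cases "bit_width n") auto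
  then have "\<not> n < 2 ^ (bit_width n - 1)"
    unfolding bit_width_def by (intro not_less_Least) (simp add: bit_width_def)
  then show ?thesis by simp
qed

lemma log_bit_width:
  assumes "1 \<le> n"
  shows "real (bit_width n) - 1 \<le> log 2 n" and "log 2 n < bit_width n"
proof -
  have "real (bit_width n - 1) \<le> log 2 n"
    by (rule le_log2_of_power[OF power_bit_width_minus_1_le[OF assms]])
  then show "real (bit_width n) - 1 \<le> log 2 n" by linarith
  show "log 2 n < bit_width n"
    using less_power_bit_width[of n] assms by (intro log2_of_power_less) auto
qed

lemma square_le_two_power: "7 \<le> w \<Longrightarrow> w * w \<le> 2 ^ (w - 1)"
proof (induction w rule: nat_induct_at_least)
  case (Suc w)
  have "7 * w \<le> w * w" using Suc.hyps by (rule mult_le_mono1)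
  moreover have "Suc w * Suc w = w * w + 2 * w + 1" by simp
  ultimately have "Suc w * Suc w \<le> 2 * (w * w)" using Suc.hyps by linarith
  also have "\<dots> \<le> 2 ^ (Suc w - 1)"
    using Suc.IH Suc.hyps by (cases w) auto
  finally show ?case .
qed simp

lemma large_parameters:
  assumes "2 ^ 8 \<le> n"
  shows "1 \<le> block_count n" and "hub_count n \<le> n" and "n < 2 ^ Suc (hub_count n)"
proof -
  let ?w = "bit_width n"
  have w: "8 < ?w" using less_bit_width_if_power_le[OF assms] .
  then have "?w * 8 \<le> ?w * ?w" by simp
  then have w_q: "?w \<le> block_count n" by (simp add: block_count_def less_eq_div_iff_mult_less_eq)
  with w show q: "1 \<le> block_count n" by simp
  have "hub_count n \<le> ?w * ?w" by (simp add: hub_count_def block_count_def)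
  also have "\<dots> \<le> 2 ^ (?w - 1)" using w by (intro square_le_two_power) simp
  also have "\<dots> \<le> n" using assms by (intro power_bit_width_minus_1_le) simp
  finally show "hub_count n \<le> n" .
  have "n < 2 ^ ?w" by (rule less_power_bit_width)
  also have "(2::nat) ^ ?w \<le> 2 ^ Suc (hub_count n)"
    using w_q q by (intro power_increasing) (simp_all add: hub_count_def)
  finally show "n < 2 ^ Suc (hub_count n)" .
qed

lemma one_le_square_div_8: "3 \<le> w \<Longrightarrow> 1 \<le> w * w div (8::nat)"
  using div_le_mono[of 8 "w * w" 8] mult_le_mono[of 3 w 3 w] by simp

lemma saving_exceeds_deficiency:
  fixes c l :: real and w k C :: nat
  assumes "c \<le> C" "0 \<le> l" "l < w" "4 * C + 4 * k + 40 < w"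
  shows "real (8 * (w * w div 8) + 2 * w + k) + c * l < real (2 * (5 * (w * w div 8) - 1 - 2))"
proof -
  let ?q = "w * w div 8"
  have "1 \<le> ?q" using assms(4) by (intro one_le_square_div_8) simp
  have q: "real (w * w) < 8 * real ?q + 8"
    using div_mult_mod_eq[of "w * w" 8] mod_less_divisor[of 8 "w * w"] by linarith
  have "(4 * C + 4 * k + 41) * w \<le> w * w"
    using assms(4) by (intro mult_le_mono1) simp
  then have w: "4 * (real C * w) + 4 * (real k * w) + 41 * w \<le> real w * w"
    by (simp add: algebra_simps flip: of_nat_mult of_nat_le_iff)
  have "c * l \<le> real C * w"
    using assms by (intro mult_mono) simp_all
  moreover have "real k * 1 \<le> real k * w"
    using assms(4) by (intro mult_left_mono) simp_all
  moreover have "1 \<le> real w"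
    using assms(4) by simp
  ultimately show ?thesis
    using \<open>1 \<le> ?q\<close> q w by (simp add: of_nat_diff)
qed

lemma label_length_arith:
  fixes c l :: real and w :: nat
  assumes "0 \<le> c" "real w - 1 \<le> l" "41 \<le> w"
  shows "real (2 * (5 * (w * w div 8) - 1) + 4) \<le> (1 + (c + 3) * l) * l"
proof -
  let ?q = "w * w div 8"
  have "1 \<le> ?q" using assms(3) by (intro one_le_square_div_8) simp
  have l: "40 \<le> l" using assms by linarith
  have "8 * real ?q \<le> real w * w"
    by (simp flip: of_nat_mult of_nat_le_iff)
  also have "\<dots> \<le> (l + 1) * (l + 1)"
    using assms by (intro mult_mono) simp_all
  finally have "8 * real ?q \<le> l * l + 2 * l + 1" by (simp add: algebra_simps)
  moreover have "40 * l \<le> l * l" "0 \<le> c * (l * l)"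
    using l assms(1) by (simp_all add: mult_right_mono)
  ultimately show ?thesis
    using \<open>1 \<le> ?q\<close> by (simp add: of_nat_diff algebra_simps)
qed

lemma random_graph_common_hubs:
  assumes "universal U" and "0 \<le> c"
  obtains N where "\<And>n adj u v. N \<le> n \<Longrightarrow> is_graph n adj \<Longrightarrow> random_graph U (c * log 2 n) n adj \<Longrightarrow>
    u \<in> {1..n} \<Longrightarrow> v \<in> {1..n} \<Longrightarrow> u \<noteq> v \<Longrightarrow> \<exists>w. hub (hub_count n) u v w \<and> adj u w \<and> adj v w"
proof -
  obtain k where k: "\<And>n adj u v. no_common_hub n adj u v \<Longrightarrow>
      KC U (graph_code n adj) n + 2 * (hub_count n - 2) \<le> header_length n + n * (n - 1) div 2 + k"
    using graph_code_compressible[OF assms(1)] by blast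
  define C where "C = nat \<lceil>c\<rceil>"
  have "\<exists>w. hub (hub_count n) u v w \<and> adj u w \<and> adj v w"
    if n: "2 ^ (4 * C + 4 * k + 40) \<le> n" and "is_graph n adj" "random_graph U (c * log 2 n) n adj"
      "u \<in> {1..n}" "v \<in> {1..n}" "u \<noteq> v" for n adj u v
  proof (rule ccontr)
    assume "\<nexists>w. hub (hub_count n) u v w \<and> adj u w \<and> adj v w"
    moreover have "(2::nat) ^ 8 \<le> 2 ^ (4 * C + 4 * k + 40)" by (intro power_increasing) simp_all
    ultimately have "no_common_hub n adj u v"
      using that large_parameters[of n] by unfold_locales auto
    then have "KC U (graph_code n adj) n + 2 * (hub_count n - 2) \<le>
        header_length n + n * (n - 1) div 2 + k"
      by (rule k)
    then have "real (KC U (graph_code n adj) n) + real (2 * (hub_count n - 2)) \<le>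
        real (header_length n) + real (n * (n - 1) div 2) + real k"
      by (simp only: of_nat_add[symmetric] of_nat_le_iff)
    moreover have "real (n * (n - 1) div 2) - c * log 2 n \<le> real (KC U (graph_code n adj) n)"
      using that by (simp add: random_graph_def)
    moreover have "real (header_length n) + real k + c * log 2 n < real (2 * (hub_count n - 2))"
    proof -
      have "1 \<le> n" using n by (metis le_trans one_le_numeral one_le_power)
      then show ?thesis
        using saving_exceeds_deficiency[of c C "log 2 n" "bit_width n" k] less_bit_width_if_power_le[OF n]
          log_bit_width[of n] assms(2)
        by (simp add: C_def header_length_def hub_count_def block_count_def)
    qed
    ultimately show False by linarith
  qed
  then show ?thesis by (rule that)
qed

lemma routing_label_length:
  assumes "2 ^ 41 \<le> n" "v \<le> n" "0 \<le> c"
  shows "real (length (routing_label adj (hub_count n) v)) \<le> (1 + (c + 3) * log 2 n) * log 2 n"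
proof -
  have "(2::nat) ^ 8 \<le> 2 ^ 41" by simp
  then have "v < 2 ^ Suc (hub_count n)"
    using large_parameters(3)[of n] assms by linarith
  then have "length (routing_label adj (hub_count n) v) \<le> 2 * hub_count n + 4"
    by (rule length_routing_label)
  then have "real (length (routing_label adj (hub_count n) v)) \<le> real (2 * hub_count n + 4)"
    by (simp only: of_nat_le_iff)
  also have "\<dots> \<le> (1 + (c + 3) * log 2 n) * log 2 n"
    using label_length_arith[OF assms(3) log_bit_width(1)] less_bit_width_if_power_le[OF assms(1)] assms(1)
    by (simp add: hub_count_def block_count_def)
  finally show ?thesis .
qed


theorem theorem2:
  fixes U :: "bool list \<Rightarrow> nat \<Rightarrow> bool list option" and c :: real
  assumes "universal U" and "c \<ge> 0"
  shows "\<exists>D :: bool list \<Rightarrow> bool list \<Rightarrow> bool list list \<Rightarrow> bool list \<Rightarrow> nat.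
           \<exists>K K' :: real. computable_router D \<and>
           (\<exists>N. \<forall>n \<ge> N. \<forall>adj ports.
              is_graph n adj \<and> random_graph U (c * log 2 n) n adj \<and> valid_ports n adj ports \<longrightarrow>
              (\<exists>lab bits :: nat \<Rightarrow> bool list.
                 inj_on lab {1..n} \<and>
                 (\<forall>u\<in>{1..n}. real (length (lab u)) \<le> (1 + (c + 3) * log 2 n) * log 2 n) \<and>
                 (\<forall>u\<in>{1..n}. real (length (bits u)) \<le> K) \<and>
                 routes_by_ports n D ports lab bits \<and>
                 shortest_path_routing n adj (next_hop D ports lab bits) \<and>
                 real (\<Sum>u\<in>{1..n}. length (bits u) + length (lab u))
                   \<le> (c + 3) * n * (log 2 n)^2 + n * log 2 n + K' * n))"
proof -
  obtain N where common_hubs: "\<And>n adj u v. N \<le> n \<Longrightarrow> is_graph n adj \<Longrightarrow> random_graph U (c * log 2 n) n adj \<Longrightarrow>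
      u \<in> {1..n} \<Longrightarrow> v \<in> {1..n} \<Longrightarrow> u \<noteq> v \<Longrightarrow> \<exists>w. hub (hub_count n) u v w \<and> adj u w \<and> adj v w"
    using random_graph_common_hubs[OF assms] by blast
  show ?thesis
  proof (intro exI[of _ router] exI[of _ "0::real"] conjI computable_router exI[of _ "max N (2 ^ 41)"] allI impI,
      goal_cases)
    case (1 n adj ports)
    then have n: "max N (2 ^ 41) \<le> n" and graph: "is_graph n adj"
      and random: "random_graph U (c * log 2 n) n adj" and ports: "valid_ports n adj ports"
      by simp_all
    interpret hub_routing n adj ports "hub_count n"
      using graph ports common_hubs[OF _ graph random] n by unfold_locales (auto simp: hub_def)
    have label: "\<forall>u\<in>{1..n}. real (length (label u)) \<le> (1 + (c + 3) * log 2 n) * log 2 n"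
      using routing_label_length[of n _ c] n assms(2) by simp
    with total_space_le[OF label] inj_label routes_by_ports shortest_path_routing show ?case
      by (intro exI[of _ label] exI[of _ no_bits]) (simp add: algebra_simps power2_eq_square)
  qed
qed

end
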